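(* In the boundary-driven switching system with $\epsilon\in(0,1]$, $\gamma>0$, $N\ge2$, let $\vec\rho=(\rho_{L,0},\rho_{L,1},\rho_{R,0},\rho_{R,1})^T$. Then for all $x\in V$, $$\theta_0(x)=(\vec c_1\cdot\vec\rho)x+\vec c_2\cdot\vec\rho+\epsilon(\vec c_3\cdot\vec\rho)\alpha_1^x+\epsilon(\vec c_4\cdot\vec\rho)\alpha_2^x,\qquad \theta_1(x)=(\vec c_1\cdot\vec\rho)x+\vec c_2\cdot\vec\rho-(\vec c_3\cdot\vec\rho)\alpha_1^x-(\vec c_4\cdot\vec\rho)\alpha_2^x.$$
   Context: Boundary-driven switching system: fix $\sigma\in\{-1,0,1\}$, $N\in\mathbb N$, $V=\{1,\dots,N\}$, $\epsilon\in[0,1]$, $\gamma>0$, and reservoir parameters $\rho_{L,0},\rho_{L,1},\rho_{R,0},\rho_{R,1}\ge0$ (in $[0,1]$ if $\sigma=-1$). Configurations are $\eta=(\eta_0(x),\eta_1(x))_{x\in V}$ with values in $\{0,1\}$ if $\sigma=-1$ and in $\mathbb N_0$ if $\sigma\in\{0,1\}$. Writing $\delta_{(x,i)}$ for one particle at site $x$ in layer $i$, the continuous-time Markov chain has transitions: for $x\in\{1,\dots,N-1\}$, $i\in\{0,1\}$, $\eta\to\eta-\delta_{(x,i)}+\delta_{(x+1,i)}$ at rate $\epsilon^i\eta_i(x)(1+\sigma\eta_i(x+1))$ and $\eta\to\eta-\delta_{(x+1,i)}+\delta_{(x,i)}$ at rate $\epsilon^i\eta_i(x+1)(1+\sigma\eta_i(x))$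 ($\epsilon^0=1$); for $x\in V$, $\eta\to\eta-\delta_{(x,i)}+\delta_{(x,1-i)}$ at rate $\gamma\eta_i(x)(1+\sigma\eta_{1-i}(x))$; and for $i\in\{0,1\}$, $\eta\to\eta-\delta_{(1,i)}$ at rate $\eta_i(1)(1+\sigma\rho_{L,i})$, $\eta\to\eta+\delta_{(1,i)}$ at rate $\rho_{L,i}(1+\sigma\eta_i(1))$, $\eta\to\eta-\delta_{(N,i)}$ at rate $\eta_i(N)(1+\sigma\rho_{R,i})$, $\eta\to\eta+\delta_{(N,i)}$ at rate $\rho_{R,i}(1+\sigma\eta_i(N))$. This chain has a unique stationary distribution $\mu_{stat}$, and $\theta_i(x):=\mathbb E_{\mu_{stat}}[\eta_i(x)]$ is the stationary microscopic profile. Let $\alpha_1<\alpha_2$ be the two roots of $\epsilon\alpha^2-(\gamma(1+\epsilon)+2\epsilon)\alpha+\epsilon=0$, i.e. $\alpha_{1,2}=1+\frac\gamma2(1+\frac1\epsilon)\mp\sqrt{[1+\frac\gamma2(1+\frac1\epsilon)]^2-1}$. Let $$M_\epsilon=\begin{pmatrix}0&1&\epsilon&\epsilon\\ 1-\epsilon&1&(\epsilon-1)\alpha_1-\epsilon&(\epsilon-1)\alpha_2-\epsilon\\ N+1&1&\epsilon\alpha_1^{N+1}&\epsilon\alpha_2^{N+1}\\ N+\epsilon&1&-\alpha_1^N(\epsilon\alpha_1+1-\epsilon)&-\alpha_2^N(\epsilon\alpha_2+1-\epsilon)\end{pmatrix}$$ (an invertible matrix), and for $k\in\{1,2,3,4\}$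 let $\vec c_k=(M_\epsilon^{-1})^T\vec e_k\in\mathbb R^4$ (the transpose of the $k$-th row of $M_\epsilon^{-1}$). *)

theory Defs
  imports "HOL-Analysis.Analysis" "HOL-Probability.Probability"
begin

text \<open>A configuration: eta i x = number of particles in layer i (0 or 1) at site x (1..N).\<close>
type_synonym cfg = "nat \<Rightarrow> nat \<Rightarrow> nat"

definition valid_cfg :: "int \<Rightarrow> nat \<Rightarrow> cfg \<Rightarrow> bool" where
  "valid_cfg \<sigma> N \<eta> \<longleftrightarrow>
     (\<forall>i x. (i \<notin> {0,1} \<or> x \<notin> {1..N}) \<longrightarrow> \<eta> i x = 0) \<and>
     (\<sigma> = -1 \<longrightarrow> (\<forall>i x. \<eta> i x \<le> 1))"

definition rem_p :: "cfg \<Rightarrow> nat \<Rightarrow> nat \<Rightarrow> cfg" where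
  "rem_p \<eta> i x = \<eta>(i := (\<eta> i)(x := \<eta> i x - 1))"
definition add_p :: "cfg \<Rightarrow> nat \<Rightarrow> nat \<Rightarrow> cfg" where
  "add_p \<eta> i x = \<eta>(i := (\<eta> i)(x := \<eta> i x + 1))"

definition move_p :: "cfg \<Rightarrow> nat \<Rightarrow> nat \<Rightarrow> nat \<Rightarrow> nat \<Rightarrow> cfg" where
  "move_p \<eta> i x j y = add_p (rem_p \<eta> i x) j y"

text \<open>All transitions out of eta, as (target, rate) pairs.
  Reservoir parameters rL i, rR i stand for rho_{L,i}, rho_{R,i}.\<close>
definition transitions ::
  "int \<Rightarrow> nat \<Rightarrow> real \<Rightarrow> real \<Rightarrow> (nat \<Rightarrow> real) \<Rightarrow> (nat \<Rightarrow> real) \<Rightarrow> cfg \<Rightarrow> (cfg \<times> real) list" where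
  "transitions \<sigma> N \<epsilon> \<gamma> rL rR \<eta> =
     concat (map (\<lambda>i. concat (map (\<lambda>x.
        [(move_p \<eta> i x i (x+1), \<epsilon>^i * real (\<eta> i x) * (1 + of_int \<sigma> * real (\<eta> i (x+1)))),
         (move_p \<eta> i (x+1) i x, \<epsilon>^i * real (\<eta> i (x+1)) * (1 + of_int \<sigma> * real (\<eta> i x)))])
       [1..<N])) [0,1])
   @ concat (map (\<lambda>i. map (\<lambda>x.
        (move_p \<eta> i x (1-i) x, \<gamma> * real (\<eta> i x) * (1 + of_int \<sigma> * real (\<eta> (1-i) x))))
       [1..<N+1]) [0,1])
   @ concat (map (\<lambda>i.
        [(rem_p \<eta> i 1, real (\<eta> i 1) * (1 + of_int \<sigma> * rL i)),
         (add_p \<eta> i 1, rL i * (1 + of_int \<sigma> * real (\<eta> i 1))),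
         (rem_p \<eta> i N, real (\<eta> i N) * (1 + of_int \<sigma> * rR i)),
         (add_p \<eta> i N, rR i * (1 + of_int \<sigma> * real (\<eta> i N)))]) [0,1])"

definition jump_rate ::
  "int \<Rightarrow> nat \<Rightarrow> real \<Rightarrow> real \<Rightarrow> (nat \<Rightarrow> real) \<Rightarrow> (nat \<Rightarrow> real) \<Rightarrow> cfg \<Rightarrow> cfg \<Rightarrow> real" where
  "jump_rate \<sigma> N \<epsilon> \<gamma> rL rR \<xi> \<eta> =
     sum_list (map snd (filter (\<lambda>p. fst p = \<eta>) (transitions \<sigma> N \<epsilon> \<gamma> rL rR \<xi>)))"

definition exit_rate ::
  "int \<Rightarrow> nat \<Rightarrow> real \<Rightarrow> real \<Rightarrow> (nat \<Rightarrow> real) \<Rightarrow> (nat \<Rightarrow> real) \<Rightarrow> cfg \<Rightarrow> real" where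
  "exit_rate \<sigma> N \<epsilon> \<gamma> rL rR \<eta> = sum_list (map snd (transitions \<sigma> N \<epsilon> \<gamma> rL rR \<eta>))"

definition stationary ::
  "int \<Rightarrow> nat \<Rightarrow> real \<Rightarrow> real \<Rightarrow> (nat \<Rightarrow> real) \<Rightarrow> (nat \<Rightarrow> real) \<Rightarrow> cfg pmf \<Rightarrow> bool" where
  "stationary \<sigma> N \<epsilon> \<gamma> rL rR \<mu> \<longleftrightarrow>
     set_pmf \<mu> \<subseteq> {\<eta>. valid_cfg \<sigma> N \<eta>} \<and>
     (\<forall>\<eta>. valid_cfg \<sigma> N \<eta> \<longrightarrow>
        infsum (\<lambda>\<xi>. pmf \<mu> \<xi> * jump_rate \<sigma> N \<epsilon> \<gamma> rL rR \<xi> \<eta>) UNIV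
          = pmf \<mu> \<eta> * exit_rate \<sigma> N \<epsilon> \<gamma> rL rR \<eta>)"

definition alpha1 :: "real \<Rightarrow> real \<Rightarrow> real" where
  "alpha1 \<epsilon> \<gamma> = 1 + \<gamma>/2 * (1 + 1/\<epsilon>) - sqrt ((1 + \<gamma>/2 * (1 + 1/\<epsilon>))^2 - 1)"
definition alpha2 :: "real \<Rightarrow> real \<Rightarrow> real" where
  "alpha2 \<epsilon> \<gamma> = 1 + \<gamma>/2 * (1 + 1/\<epsilon>) + sqrt ((1 + \<gamma>/2 * (1 + 1/\<epsilon>))^2 - 1)"

text \<open>The matrix M_epsilon; M $ r $ c is the entry in row r, column c (indices 1..4).\<close>
definition Mmat :: "real \<Rightarrow> real \<Rightarrow> nat \<Rightarrow> real^4^4" where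
  "Mmat \<epsilon> \<gamma> N = (let a1 = alpha1 \<epsilon> \<gamma>; a2 = alpha2 \<epsilon> \<gamma> in
     vector [
       vector [0, 1, \<epsilon>, \<epsilon>],
       vector [1 - \<epsilon>, 1, (\<epsilon> - 1) * a1 - \<epsilon>, (\<epsilon> - 1) * a2 - \<epsilon>],
       vector [real N + 1, 1, \<epsilon> * a1 ^ (N+1), \<epsilon> * a2 ^ (N+1)],
       vector [real N + \<epsilon>, 1, - (a1 ^ N * (\<epsilon> * a1 + 1 - \<epsilon>)), - (a2 ^ N * (\<epsilon> * a2 + 1 - \<epsilon>))]])"

definition cvec :: "real \<Rightarrow> real \<Rightarrow> nat \<Rightarrow> 4 \<Rightarrow> real^4" where
  "cvec \<epsilon> \<gamma> N k = matrix_inv (Mmat \<epsilon> \<gamma> N) $ k"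

end

(* The stationary profile theta is characterised by linear equations. For a linear observable
   lin_obs v = sum of v(i,x) eta_i(x), the generator L (lin_obs v) is again an affine function of
   the configuration, namely drift_form(eta, v), and stationarity gives E[L (lin_obs v)] = 0,
   i.e. drift_form(theta, v) = 0 for every weight vector v. Linear observables are unbounded, so
   this identity is obtained from the finitely supported truncations cutoff_K (lin_obs v) by
   dominated convergence; the required first moment of mu comes from the Lyapunov function with
   parabolic weights x (N + 1 - x), whose drift is at most a constant minus 2 epsilon times the
   particle number.

   The equations drift_form(r, v) = 0 for all v determine r: taking v = r (with zero reservoirs)
   gives minus a sum of squares (a discrete Dirichlet energy). Summation by parts shows that the
   explicit profile x z_1 + z_2 + (epsilon z_3, -z_3) alpha_1^x + (epsilon z_4, -z_4) alpha_2^x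
   solves the bulk equations, and its boundary equations read M_epsilon z = rho. *)

theory Submission
  imports Defs
begin

section \<open>Linear observables and the generator\<close>

definition lin_obs :: "nat \<Rightarrow> (nat \<Rightarrow> nat \<Rightarrow> real) \<Rightarrow> cfg \<Rightarrow> real" where
  "lin_obs N v \<eta> = (\<Sum>x\<in>{1..N}. v 0 x * real (\<eta> 0 x)) + (\<Sum>x\<in>{1..N}. v 1 x * real (\<eta> 1 x))"

definition generator :: "(cfg \<times> real) list \<Rightarrow> (cfg \<Rightarrow> real) \<Rightarrow> cfg \<Rightarrow> real" where
  "generator L g \<xi> = sum_list (map (\<lambda>p. snd p * (g (fst p) - g \<xi>)) L)"

lemma sum_list_concat: "sum_list (concat xss) = sum_list (map sum_list (xss :: 'a::monoid_add list list))"
  by (induction xss) auto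

lemma generator_split:
  "generator L h \<xi> = sum_list (map (\<lambda>p. snd p * h (fst p)) L) - sum_list (map snd L) * h \<xi>"
  unfolding generator_def by (induction L) (auto simp: algebra_simps)

lemma generator_transitions:
  fixes rL rR :: "nat \<Rightarrow> real"
  shows "generator (transitions \<sigma> N \<epsilon> \<gamma> rL rR \<xi>) g \<xi> =
 (\<Sum>x\<in>{1..<N}. real (\<xi> 0 x) * (1 + of_int \<sigma> * real (\<xi> 0 (x+1))) * (g (move_p \<xi> 0 x 0 (x+1)) - g \<xi>)
     + real (\<xi> 0 (x+1)) * (1 + of_int \<sigma> * real (\<xi> 0 x)) * (g (move_p \<xi> 0 (x+1) 0 x) - g \<xi>))
 + (\<Sum>x\<in>{1..<N}. \<epsilon> * real (\<xi> 1 x) * (1 + of_int \<sigma> * real (\<xi> 1 (x+1))) * (g (move_p \<xi> 1 x 1 (x+1)) - g \<xi>)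
     + \<epsilon> * real (\<xi> 1 (x+1)) * (1 + of_int \<sigma> * real (\<xi> 1 x)) * (g (move_p \<xi> 1 (x+1) 1 x) - g \<xi>))
 + (\<Sum>x\<in>{1..N}. \<gamma> * real (\<xi> 0 x) * (1 + of_int \<sigma> * real (\<xi> 1 x)) * (g (move_p \<xi> 0 x 1 x) - g \<xi>))
 + (\<Sum>x\<in>{1..N}. \<gamma> * real (\<xi> 1 x) * (1 + of_int \<sigma> * real (\<xi> 0 x)) * (g (move_p \<xi> 1 x 0 x) - g \<xi>))
 + (real (\<xi> 0 1) * (1 + of_int \<sigma> * rL 0) * (g (rem_p \<xi> 0 1) - g \<xi>)
   + rL 0 * (1 + of_int \<sigma> * real (\<xi> 0 1)) * (g (add_p \<xi> 0 1) - g \<xi>)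
   + real (\<xi> 0 N) * (1 + of_int \<sigma> * rR 0) * (g (rem_p \<xi> 0 N) - g \<xi>)
   + rR 0 * (1 + of_int \<sigma> * real (\<xi> 0 N)) * (g (add_p \<xi> 0 N) - g \<xi>))
 + (real (\<xi> 1 1) * (1 + of_int \<sigma> * rL 1) * (g (rem_p \<xi> 1 1) - g \<xi>)
   + rL 1 * (1 + of_int \<sigma> * real (\<xi> 1 1)) * (g (add_p \<xi> 1 1) - g \<xi>)
   + real (\<xi> 1 N) * (1 + of_int \<sigma> * rR 1) * (g (rem_p \<xi> 1 N) - g \<xi>)
   + rR 1 * (1 + of_int \<sigma> * real (\<xi> 1 N)) * (g (add_p \<xi> 1 N) - g \<xi>))"
proof -
  have bulk: "sum_list (map f [Suc 0..<N]) = sum f {1..<N}" for f :: "nat \<Rightarrow> real"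
    by (simp add: sum_set_upt_conv_sum_list_nat[symmetric])
  have sites: "sum_list (map f [Suc 0..<Suc N]) = sum f {1..N}" for f :: "nat \<Rightarrow> real"
    by (metis atLeastLessThanSuc_atLeastAtMost One_nat_def set_upt sum_set_upt_conv_sum_list_nat)
  show ?thesis
    unfolding generator_def transitions_def
    by (simp del: upt_Suc add: map_concat sum_list_concat comp_def bulk sites sum.distrib algebra_simps)
qed

lemma set_transitions:
  "p \<in> set (transitions \<sigma> N \<epsilon> \<gamma> rL rR \<eta>) \<longleftrightarrow>
     (\<exists>i\<in>{0,1}. \<exists>x\<in>{1..<N}.
        p = (move_p \<eta> i x i (x+1), \<epsilon>^i * real (\<eta> i x) * (1 + of_int \<sigma> * real (\<eta> i (x+1)))) \<or>
        p = (move_p \<eta> i (x+1) i x, \<epsilon>^i * real (\<eta> i (x+1)) * (1 + of_int \<sigma> * real (\<eta> i x)))) \<or>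
     (\<exists>i\<in>{0,1}. \<exists>x\<in>{1..N}.
        p = (move_p \<eta> i x (1-i) x, \<gamma> * real (\<eta> i x) * (1 + of_int \<sigma> * real (\<eta> (1-i) x)))) \<or>
     (\<exists>i\<in>{0,1}. \<exists>(y, r)\<in>{(1, rL i), (N, rR i)}.
        p = (rem_p \<eta> i y, real (\<eta> i y) * (1 + of_int \<sigma> * r)) \<or>
        p = (add_p \<eta> i y, r * (1 + of_int \<sigma> * real (\<eta> i y))))"
proof -
  have layers: "(\<exists>i\<in>set [0::nat,1]. P i) \<longleftrightarrow> (\<exists>i\<in>{0,1}. P i)" for P by simp
  show ?thesis
    unfolding transitions_def set_append Un_iff set_concat set_map UN_iff image_iff layers
    by (simp del: upt_Suc add: atLeastLessThanSuc_atLeastAtMost) blast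
qed

lemma transitions_cases:
  assumes "p \<in> set (transitions \<sigma> N \<epsilon> \<gamma> rL rR \<eta>)"
  obtains (bulk) i x where "i \<in> {0,1}" "x \<in> {1..<N}"
      "p = (move_p \<eta> i x i (x+1), \<epsilon>^i * real (\<eta> i x) * (1 + of_int \<sigma> * real (\<eta> i (x+1)))) \<or>
       p = (move_p \<eta> i (x+1) i x, \<epsilon>^i * real (\<eta> i (x+1)) * (1 + of_int \<sigma> * real (\<eta> i x)))"
  | (switch) i x where "i \<in> {0,1}" "x \<in> {1..N}"
      "p = (move_p \<eta> i x (1-i) x, \<gamma> * real (\<eta> i x) * (1 + of_int \<sigma> * real (\<eta> (1-i) x)))"
  | (reservoir) i y r where "i \<in> {0,1}" "(y, r) \<in> {(1, rL i), (N, rR i)}"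
      "p = (rem_p \<eta> i y, real (\<eta> i y) * (1 + of_int \<sigma> * r)) \<or>
       p = (add_p \<eta> i y, r * (1 + of_int \<sigma> * real (\<eta> i y)))"
  using assms unfolding set_transitions by (elim disjE) (blast intro: that)+

lemma lin_obs_update:
  assumes "i \<le> 1" "x \<in> {1..N}"
  shows "lin_obs N v (\<eta>(i := (\<eta> i)(x := k))) = lin_obs N v \<eta> + v i x * (real k - real (\<eta> i x))"
proof -
  have layer: "(\<Sum>y\<in>{1..N}. w y * real ((f(x := k)) y))
      = (\<Sum>y\<in>{1..N}. w y * real (f y)) + w x * (real k - real (f x))"
    for f :: "nat \<Rightarrow> nat" and w :: "nat \<Rightarrow> real"
  proof -
    have "(\<Sum>y\<in>{1..N}. w y * real ((f(x := k)) y))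
        = (\<Sum>y\<in>{1..N}. w y * real (f y) + (if y = x then w x * (real k - real (f x)) else 0))"
      by (rule sum.cong) (auto simp: algebra_simps)
    then show ?thesis
      using assms(2) by (simp add: sum.distrib)
  qed
  from assms(1) consider "i = 0" | "i = 1" by linarith
  then show ?thesis
    by cases (use layer[where f="\<eta> 0" and w="v 0"] layer[where f="\<eta> 1" and w="v 1"] in \<open>simp_all add: lin_obs_def\<close>)
qed

lemma lin_obs_add_p:
  "i \<le> 1 \<Longrightarrow> x \<in> {1..N} \<Longrightarrow> lin_obs N v (add_p \<eta> i x) = lin_obs N v \<eta> + v i x"
  unfolding add_p_def by (simp add: lin_obs_update)

lemma lin_obs_rem_p:
  "i \<le> 1 \<Longrightarrow> x \<in> {1..N} \<Longrightarrow>
    lin_obs N v (rem_p \<eta> i x) = lin_obs N v \<eta> - (if \<eta> i x = 0 then 0 else v i x)"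
  unfolding rem_p_def by (simp add: lin_obs_update of_nat_diff)

lemma lin_obs_move_p:
  "i \<le> 1 \<Longrightarrow> x \<in> {1..N} \<Longrightarrow> j \<le> 1 \<Longrightarrow> y \<in> {1..N} \<Longrightarrow>
    lin_obs N v (move_p \<eta> i x j y) = lin_obs N v \<eta> - (if \<eta> i x = 0 then 0 else v i x) + v j y"
  unfolding move_p_def by (simp add: lin_obs_add_p lin_obs_rem_p)

text \<open>The factor \<open>\<eta> i x\<close> of a jump rate kills the case \<open>\<eta> i x = 0\<close>, where
  \<^const>\<open>rem_p\<close> truncates and the observable does not change.\<close>

lemma lin_obs_exchange:
  assumes "i \<le> 1" "x \<in> {1..N}" "j \<le> 1" "y \<in> {1..N}"
  shows "e * real (\<eta> i x) * (1 + s * real (\<eta> j y)) * (lin_obs N v (move_p \<eta> i x j y) - lin_obs N v \<eta>)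
       + e * real (\<eta> j y) * (1 + s * real (\<eta> i x)) * (lin_obs N v (move_p \<eta> j y i x) - lin_obs N v \<eta>)
       = e * ((real (\<eta> i x) - real (\<eta> j y)) * (v j y - v i x))"
proof -
  have ij: "real (\<eta> i x) * (lin_obs N v (move_p \<eta> i x j y) - lin_obs N v \<eta>) = real (\<eta> i x) * (v j y - v i x)"
    and ji: "real (\<eta> j y) * (lin_obs N v (move_p \<eta> j y i x) - lin_obs N v \<eta>) = real (\<eta> j y) * (v i x - v j y)"
    using assms by (auto simp: lin_obs_move_p)
  have "e * (1 + s * real (\<eta> j y)) * (real (\<eta> i x) * (lin_obs N v (move_p \<eta> i x j y) - lin_obs N v \<eta>))
       + e * (1 + s * real (\<eta> i x)) * (real (\<eta> j y) * (lin_obs N v (move_p \<eta> j y i x) - lin_obs N v \<eta>))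
       = e * ((real (\<eta> i x) - real (\<eta> j y)) * (v j y - v i x))"
    unfolding ij ji by (simp add: algebra_simps)
  then show ?thesis
    by (simp add: ac_simps)
qed

lemma lin_obs_reservoir:
  assumes "i \<le> 1" "x \<in> {1..N}"
  shows "real (\<eta> i x) * (1 + s * r) * (lin_obs N v (rem_p \<eta> i x) - lin_obs N v \<eta>)
       + r * (1 + s * real (\<eta> i x)) * (lin_obs N v (add_p \<eta> i x) - lin_obs N v \<eta>)
       = (r - real (\<eta> i x)) * v i x"
proof -
  have rem: "real (\<eta> i x) * (lin_obs N v (rem_p \<eta> i x) - lin_obs N v \<eta>) = - real (\<eta> i x) * v i x"
    using assms by (simp add: lin_obs_rem_p)
  have "(1 + s * r) * (real (\<eta> i x) * (lin_obs N v (rem_p \<eta> i x) - lin_obs N v \<eta>))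
       + r * (1 + s * real (\<eta> i x)) * v i x = (r - real (\<eta> i x)) * v i x"
    unfolding rem by (simp add: algebra_simps)
  then show ?thesis
    using assms by (simp add: lin_obs_add_p ac_simps)
qed

text \<open>\<open>drift_form \<epsilon> \<gamma> N a b c d r v\<close> is the generator applied to the linear observable with
  weights \<open>v\<close>, evaluated at occupations \<open>r\<close> and reservoir densities \<open>a, b, c, d\<close>
  (for \<open>\<rho>\<^sub>L\<^sub>,\<^sub>0, \<rho>\<^sub>L\<^sub>,\<^sub>1, \<rho>\<^sub>R\<^sub>,\<^sub>0, \<rho>\<^sub>R\<^sub>,\<^sub>1\<close>); it is linear in \<open>r\<close>,
  so stationarity turns it into linear equations for the profile.\<close>

definition drift_form ::
  "real \<Rightarrow> real \<Rightarrow> nat \<Rightarrow> real \<Rightarrow> real \<Rightarrow> real \<Rightarrow> real \<Rightarrow> (nat \<Rightarrow> nat \<Rightarrow> real) \<Rightarrow> (nat \<Rightarrow> nat \<Rightarrow> real) \<Rightarrow> real"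
where
  "drift_form \<epsilon> \<gamma> N a b c d r v =
     (\<Sum>x\<in>{1..<N}. (r 0 x - r 0 (x+1)) * (v 0 (x+1) - v 0 x))
   + \<epsilon> * (\<Sum>x\<in>{1..<N}. (r 1 x - r 1 (x+1)) * (v 1 (x+1) - v 1 x))
   + \<gamma> * (\<Sum>x\<in>{1..N}. (r 0 x - r 1 x) * (v 1 x - v 0 x))
   + ((a - r 0 1) * v 0 1 + (b - r 1 1) * v 1 1 + (c - r 0 N) * v 0 N + (d - r 1 N) * v 1 N)"

lemma generator_lin_obs:
  fixes rL rR :: "nat \<Rightarrow> real"
  assumes "1 \<le> N"
  shows "generator (transitions \<sigma> N \<epsilon> \<gamma> rL rR \<xi>) (lin_obs N v) \<xi>
       = drift_form \<epsilon> \<gamma> N (rL 0) (rL 1) (rR 0) (rR 1) (\<lambda>i x. real (\<xi> i x)) v"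
proof -
  let ?s = "real_of_int \<sigma>"
  have bulk: "(\<Sum>x\<in>{1..<N}. e * real (\<xi> i x) * (1 + ?s * real (\<xi> i (x+1))) * (lin_obs N v (move_p \<xi> i x i (x+1)) - lin_obs N v \<xi>)
       + e * real (\<xi> i (x+1)) * (1 + ?s * real (\<xi> i x)) * (lin_obs N v (move_p \<xi> i (x+1) i x) - lin_obs N v \<xi>))
     = e * (\<Sum>x\<in>{1..<N}. (real (\<xi> i x) - real (\<xi> i (x+1))) * (v i (x+1) - v i x))"
    if "i \<le> 1" for i e
    unfolding sum_distrib_left using that by (intro sum.cong refl lin_obs_exchange) auto
  have switch: "(\<Sum>x\<in>{1..N}. \<gamma> * real (\<xi> 0 x) * (1 + ?s * real (\<xi> 1 x)) * (lin_obs N v (move_p \<xi> 0 x 1 x) - lin_obs N v \<xi>))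
    + (\<Sum>x\<in>{1..N}. \<gamma> * real (\<xi> 1 x) * (1 + ?s * real (\<xi> 0 x)) * (lin_obs N v (move_p \<xi> 1 x 0 x) - lin_obs N v \<xi>))
    = \<gamma> * (\<Sum>x\<in>{1..N}. (real (\<xi> 0 x) - real (\<xi> 1 x)) * (v 1 x - v 0 x))"
    unfolding sum.distrib[symmetric] sum_distrib_left by (intro sum.cong refl lin_obs_exchange) auto
  show ?thesis
    using bulk[of 0 1] bulk[of 1 \<epsilon>] switch assms
      lin_obs_reservoir[of 0 1 N \<xi> ?s "rL 0" v] lin_obs_reservoir[of 0 N N \<xi> ?s "rR 0" v]
      lin_obs_reservoir[of 1 1 N \<xi> ?s "rL 1" v] lin_obs_reservoir[of 1 N N \<xi> ?s "rR 1" v]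
    unfolding generator_transitions drift_form_def by (simp add: algebra_simps)
qed

lemma drift_form_add_weights:
  "drift_form e g N a b c d r (\<lambda>i x. v i x + w i x) = drift_form e g N a b c d r v + drift_form e g N a b c d r w"
proof -
  have bulk: "(\<Sum>x\<in>{1..<N}. (r i x - r i (x+1)) * ((v i (x+1) + w i (x+1)) - (v i x + w i x)))
     = (\<Sum>x\<in>{1..<N}. (r i x - r i (x+1)) * (v i (x+1) - v i x)) + (\<Sum>x\<in>{1..<N}. (r i x - r i (x+1)) * (w i (x+1) - w i x))" for i
    by (simp add: sum.distrib[symmetric] algebra_simps)
  have switch: "(\<Sum>x\<in>{1..N}. (r 0 x - r 1 x) * ((v 1 x + w 1 x) - (v 0 x + w 0 x)))
     = (\<Sum>x\<in>{1..N}. (r 0 x - r 1 x) * (v 1 x - v 0 x)) + (\<Sum>x\<in>{1..N}. (r 0 x - r 1 x) * (w 1 x - w 0 x))"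
    by (simp add: sum.distrib[symmetric] algebra_simps)
  show ?thesis
    unfolding drift_form_def bulk switch by (simp add: algebra_simps)
qed

lemma drift_form_reservoirs:
  "drift_form e g N a b c d r v = drift_form e g N 0 0 0 0 r v + a * v 0 1 + b * v 1 1 + c * v 0 N + d * v 1 N"
  unfolding drift_form_def by (simp add: algebra_simps)

lemma drift_form_diff:
  "drift_form e g N 0 0 0 0 (\<lambda>i x. r i x - s i x) v = drift_form e g N a b c d r v - drift_form e g N a b c d s v"
proof -
  have bulk: "(\<Sum>x\<in>{1..<N}. ((r i x - s i x) - (r i (x+1) - s i (x+1))) * (v i (x+1) - v i x))
     = (\<Sum>x\<in>{1..<N}. (r i x - r i (x+1)) * (v i (x+1) - v i x)) - (\<Sum>x\<in>{1..<N}. (s i x - s i (x+1)) * (v i (x+1) - v i x))" for i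
    by (simp add: sum_subtractf[symmetric] algebra_simps)
  have switch: "(\<Sum>x\<in>{1..N}. ((r 0 x - s 0 x) - (r 1 x - s 1 x)) * (v 1 x - v 0 x))
     = (\<Sum>x\<in>{1..N}. (r 0 x - r 1 x) * (v 1 x - v 0 x)) - (\<Sum>x\<in>{1..N}. (s 0 x - s 1 x) * (v 1 x - v 0 x))"
    by (simp add: sum_subtractf[symmetric] algebra_simps)
  show ?thesis
    unfolding drift_form_def bulk switch by (simp add: algebra_simps)
qed

lemma drift_form_self:
  "drift_form \<epsilon> \<gamma> N 0 0 0 0 u u =
     - ((\<Sum>x\<in>{1..<N}. (u 0 x - u 0 (x+1))\<^sup>2) + \<epsilon> * (\<Sum>x\<in>{1..<N}. (u 1 x - u 1 (x+1))\<^sup>2)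
        + \<gamma> * (\<Sum>x\<in>{1..N}. (u 0 x - u 1 x)\<^sup>2) + (u 0 1)\<^sup>2 + (u 1 1)\<^sup>2 + (u 0 N)\<^sup>2 + (u 1 N)\<^sup>2)"
proof -
  have bulk: "(\<Sum>x\<in>A. (f x - f (x+1)) * (f (x+1) - f x)) = - (\<Sum>x\<in>A. (f x - f (x+1))\<^sup>2)"
    for f :: "nat \<Rightarrow> real" and A
    by (simp add: sum_negf[symmetric] power2_eq_square algebra_simps)
  have switch: "(\<Sum>x\<in>{1..N}. (u 0 x - u 1 x) * (u 1 x - u 0 x)) = - (\<Sum>x\<in>{1..N}. (u 0 x - u 1 x)\<^sup>2)"
    by (simp add: sum_negf[symmetric] power2_eq_square algebra_simps)
  show ?thesis
    unfolding drift_form_def bulk switch by (simp add: power2_eq_square algebra_simps)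
qed

lemma sum_by_parts_second_diff:
  fixes f g :: "nat \<Rightarrow> real"
  assumes "1 \<le> m"
  shows "(\<Sum>x\<in>{1..<m}. (f x - f (x+1)) * (g (x+1) - g x)) =
    (\<Sum>x\<in>{1..m}. g x * ((f (x-1) - f x) - (f x - f (x+1)))) - g 1 * (f 0 - f 1) + g m * (f m - f (m+1))"
  using assms
proof (induction m rule: nat_induct_at_least)
  case base
  then show ?case by (simp add: algebra_simps)
next
  case (Suc m)
  then show ?case by (simp add: algebra_simps)
qed

lemma drift_form_green:
  assumes "1 \<le> N"
  shows "drift_form \<epsilon> \<gamma> N 0 0 0 0 r v =
     (\<Sum>x\<in>{1..N}. v 0 x * (((r 0 (x-1) - r 0 x) - (r 0 x - r 0 (x+1))) + \<gamma> * (r 1 x - r 0 x))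
                 + v 1 x * (\<epsilon> * ((r 1 (x-1) - r 1 x) - (r 1 x - r 1 (x+1))) + \<gamma> * (r 0 x - r 1 x)))
     - v 0 1 * r 0 0 - v 1 1 * (\<epsilon> * r 1 0 + (1 - \<epsilon>) * r 1 1)
     - v 0 N * r 0 (N+1) - v 1 N * (\<epsilon> * r 1 (N+1) + (1 - \<epsilon>) * r 1 N)"
proof -
  have interior: "(\<Sum>x\<in>{1..N}. v 0 x * (((r 0 (x-1) - r 0 x) - (r 0 x - r 0 (x+1))) + \<gamma> * (r 1 x - r 0 x))
                 + v 1 x * (\<epsilon> * ((r 1 (x-1) - r 1 x) - (r 1 x - r 1 (x+1))) + \<gamma> * (r 0 x - r 1 x)))
     = (\<Sum>x\<in>{1..N}. v 0 x * ((r 0 (x-1) - r 0 x) - (r 0 x - r 0 (x+1))))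
     + \<epsilon> * (\<Sum>x\<in>{1..N}. v 1 x * ((r 1 (x-1) - r 1 x) - (r 1 x - r 1 (x+1))))
     + \<gamma> * (\<Sum>x\<in>{1..N}. (r 0 x - r 1 x) * (v 1 x - v 0 x))"
    unfolding sum_distrib_left sum.distrib[symmetric] by (rule sum.cong) (simp_all add: algebra_simps)
  show ?thesis
    unfolding drift_form_def interior
      sum_by_parts_second_diff[OF assms, of "r 0" "v 0"] sum_by_parts_second_diff[OF assms, of "r 1" "v 1"]
    by (simp add: algebra_simps)
qed

lemma sum_sq_increments_eq_0_imp_const:
  fixes f :: "nat \<Rightarrow> real"
  assumes "(\<Sum>x\<in>{1..<N}. (f x - f (x+1))\<^sup>2) = 0" and "x \<in> {1..N}"
  shows "f x = f 1"
proof -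
  from assms(2) have "1 \<le> x" "x \<le> N" by auto
  then show ?thesis
  proof (induction x rule: nat_induct_at_least)
    case (Suc m)
    have "(f m - f (m+1))\<^sup>2 = 0"
      using assms(1) Suc by (subst (asm) sum_nonneg_eq_0_iff) auto
    then show ?case using Suc by simp
  qed simp
qed

definition parabola :: "nat \<Rightarrow> nat \<Rightarrow> nat \<Rightarrow> real" where
  "parabola N i x = real x * (real N + 1 - real x)"

lemma sum_by_parts_parabola:
  fixes r :: "nat \<Rightarrow> real"
  assumes "1 \<le> N"
  shows "(\<Sum>x\<in>{1..<N}. (r x - r (x+1)) * (parabola N i (x+1) - parabola N i x))
       = -2 * (\<Sum>x\<in>{1..N}. r x) + real N * r 1 + real N * r N"
proof -
  have "(\<Sum>x\<in>{1..<N}. (r x - r (x+1)) * (parabola N i (x+1) - parabola N i x))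
      = (\<Sum>x\<in>{1..<N}. (parabola N i x - parabola N i (x+1)) * (r (x+1) - r x))"
    by (rule sum.cong) (auto simp: algebra_simps)
  also have "\<dots> = (\<Sum>x\<in>{1..N}. r x * ((parabola N i (x-1) - parabola N i x) - (parabola N i x - parabola N i (x+1))))
      - r 1 * (parabola N i 0 - parabola N i 1) + r N * (parabola N i N - parabola N i (N+1))"
    by (rule sum_by_parts_second_diff[OF assms])
  also have "(\<Sum>x\<in>{1..N}. r x * ((parabola N i (x-1) - parabola N i x) - (parabola N i x - parabola N i (x+1))))
      = (\<Sum>x\<in>{1..N}. -2 * r x)"
    by (rule sum.cong) (auto simp: parabola_def of_nat_diff algebra_simps)
  finally show ?thesis
    by (simp add: parabola_def sum_distrib_left algebra_simps)
qed

section \<open>A smooth cutoff\<close>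

definition cutoff :: "real \<Rightarrow> real \<Rightarrow> real" where
  "cutoff K y = (if y \<le> K then y else if y \<le> 2*K then y - (y - K)\<^sup>2 / (2*K) else 3*K/2)"

definition cutoff_slope :: "real \<Rightarrow> real \<Rightarrow> real" where
  "cutoff_slope K y = (if y \<le> K then 1 else if y \<le> 2*K then (2*K - y) / K else 0)"

lemma cutoff_slope_bounds: "0 < K \<Longrightarrow> 0 \<le> cutoff_slope K y \<and> cutoff_slope K y \<le> 1"
  unfolding cutoff_slope_def by (auto simp: field_simps)

lemma cutoff_eq_id: "y \<le> K \<Longrightarrow> cutoff K y = y"
  unfolding cutoff_def by simp

lemma cutoff_eq_const: "0 < K \<Longrightarrow> 2*K \<le> y \<Longrightarrow> cutoff K y = 3*K/2"
  unfolding cutoff_def by (auto simp: field_simps power2_eq_square)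

text \<open>The Taylor remainder of the cutoff at \<open>x\<close> is \<open>-P/(2K)\<close> with \<open>0 \<le> P \<le> (y - x)\<^sup>2\<close>:
  the cutoff is concave and its slope is \<open>1/K\<close>-Lipschitz.\<close>

lemma cutoff_remainder_below:
  assumes "0 < K" "x \<le> K"
  obtains P where "0 \<le> P" "P \<le> (y - x)\<^sup>2"
    "cutoff K y - cutoff K x - cutoff_slope K x * (y - x) = - P / (2*K)"
proof -
  consider (1) "y \<le> K" | (2) "K < y" "y \<le> 2*K" | (3) "2*K < y" by linarith
  then show ?thesis
  proof cases
    case 1
    with assms show ?thesis by (intro that[of 0]) (simp_all add: cutoff_def cutoff_slope_def)
  next
    case 2
    have gap: "(y - x)\<^sup>2 - (y - K)\<^sup>2 = (K - x) * (2*y - x - K)" by algebra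
    have "0 \<le> (K - x) * (2*y - x - K)" using assms 2 by simp
    then have "(y - K)\<^sup>2 \<le> (y - x)\<^sup>2" using gap by linarith
    moreover have "0 \<le> (y - K)\<^sup>2" using assms 2 by simp
    moreover have "cutoff K y - cutoff K x - cutoff_slope K x * (y - x) = - ((y - K)\<^sup>2) / (2*K)"
      using assms 2 by (simp add: cutoff_def cutoff_slope_def field_simps power2_eq_square)
    ultimately show ?thesis by (intro that)
  next
    case 3
    have gap: "(y - x)\<^sup>2 - K * (2*y - 3*K) = (K - x) * (2*y - x - K) + (y - 2*K)\<^sup>2" by algebra
    have "0 \<le> (K - x) * (2*y - x - K)" using assms 3 by simp
    then have "K * (2*y - 3*K) \<le> (y - x)\<^sup>2" using gap zero_le_power2[of "y - 2*K"] by linarith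
    moreover have "0 \<le> K * (2*y - 3*K)" using assms 3 by simp
    moreover have "cutoff K y - cutoff K x - cutoff_slope K x * (y - x) = - (K * (2*y - 3*K)) / (2*K)"
      using assms 3 by (simp add: cutoff_def cutoff_slope_def field_simps)
    ultimately show ?thesis by (intro that)
  qed
qed

lemma cutoff_remainder_middle:
  assumes "0 < K" "K < x" "x \<le> 2*K"
  obtains P where "0 \<le> P" "P \<le> (y - x)\<^sup>2"
    "cutoff K y - cutoff K x - cutoff_slope K x * (y - x) = - P / (2*K)"
proof -
  consider (1) "y \<le> K" | (2) "K < y" "y \<le> 2*K" | (3) "2*K < y" by linarith
  then show ?thesis
  proof cases
    case 1
    have gap: "(y - x)\<^sup>2 - (x - K) * (x - 2*y + K) = (K - y)\<^sup>2" by algebra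
    have "(x - K) * (x - 2*y + K) \<le> (y - x)\<^sup>2" using gap zero_le_power2[of "K - y"] by linarith
    moreover have "0 \<le> (x - K) * (x - 2*y + K)" using assms 1 by simp
    moreover have "cutoff K y - cutoff K x - cutoff_slope K x * (y - x) = - ((x - K) * (x - 2*y + K)) / (2*K)"
      using assms 1 by (simp add: cutoff_def cutoff_slope_def field_simps power2_eq_square)
    ultimately show ?thesis by (intro that)
  next
    case 2
    have "cutoff K y - cutoff K x - cutoff_slope K x * (y - x) = - ((y - x)\<^sup>2) / (2*K)"
      using assms 2 by (simp add: cutoff_def cutoff_slope_def field_simps power2_eq_square)
    then show ?thesis by (intro that[of "(y - x)\<^sup>2"]) simp_all
  next
    case 3
    have gap: "(y - x)\<^sup>2 - (2*K - x) * (2*y - x - 2*K) = (y - 2*K)\<^sup>2" by algebra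
    have "(2*K - x) * (2*y - x - 2*K) \<le> (y - x)\<^sup>2" using gap zero_le_power2[of "y - 2*K"] by linarith
    moreover have "0 \<le> (2*K - x) * (2*y - x - 2*K)" using assms 3 by simp
    moreover have "cutoff K y - cutoff K x - cutoff_slope K x * (y - x) = - ((2*K - x) * (2*y - x - 2*K)) / (2*K)"
      using assms 3 by (simp add: cutoff_def cutoff_slope_def field_simps power2_eq_square)
    ultimately show ?thesis by (intro that)
  qed
qed

lemma cutoff_remainder_above:
  assumes "0 < K" "2*K < x"
  obtains P where "0 \<le> P" "P \<le> (y - x)\<^sup>2"
    "cutoff K y - cutoff K x - cutoff_slope K x * (y - x) = - P / (2*K)"
proof -
  consider (1) "y \<le> K" | (2) "K < y" "y \<le> 2*K" | (3) "2*K < y" by linarith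
  then show ?thesis
  proof cases
    case 1
    have gap: "(y - x)\<^sup>2 - K * (3*K - 2*y) = (x - 2*K) * (x + 2*K - 2*y) + (K - y)\<^sup>2" by algebra
    have "0 \<le> (x - 2*K) * (x + 2*K - 2*y)" using assms 1 by simp
    then have "K * (3*K - 2*y) \<le> (y - x)\<^sup>2" using gap zero_le_power2[of "K - y"] by linarith
    moreover have "0 \<le> K * (3*K - 2*y)" using assms 1 by simp
    moreover have "cutoff K y - cutoff K x - cutoff_slope K x * (y - x) = - (K * (3*K - 2*y)) / (2*K)"
      using assms 1 by (simp add: cutoff_def cutoff_slope_def field_simps)
    ultimately show ?thesis by (intro that)
  next
    case 2
    have gap: "(y - x)\<^sup>2 - (2*K - y)\<^sup>2 = (x - 2*K) * (x + 2*K - 2*y)" by algebra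
    have "0 \<le> (x - 2*K) * (x + 2*K - 2*y)" using assms 2 by simp
    then have "(2*K - y)\<^sup>2 \<le> (y - x)\<^sup>2" using gap by linarith
    moreover have "0 \<le> (2*K - y)\<^sup>2" using assms 2 by simp
    moreover have "cutoff K y - cutoff K x - cutoff_slope K x * (y - x) = - ((2*K - y)\<^sup>2) / (2*K)"
      using assms 2 by (simp add: cutoff_def cutoff_slope_def field_simps power2_eq_square)
    ultimately show ?thesis by (intro that)
  next
    case 3
    with assms show ?thesis by (intro that[of 0]) (simp_all add: cutoff_def cutoff_slope_def)
  qed
qed

lemma cutoff_taylor:
  assumes "0 < K"
  shows "- (y - x)\<^sup>2 / (2*K) \<le> cutoff K y - cutoff K x - cutoff_slope K x * (y - x)"
    and "cutoff K y - cutoff K x - cutoff_slope K x * (y - x) \<le> 0"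
proof -
  obtain P where P: "0 \<le> P" "P \<le> (y - x)\<^sup>2"
    and R: "cutoff K y - cutoff K x - cutoff_slope K x * (y - x) = - P / (2*K)"
    using cutoff_remainder_below[OF assms] cutoff_remainder_middle[OF assms]
      cutoff_remainder_above[OF assms] by (metis not_le)
  show "- (y - x)\<^sup>2 / (2*K) \<le> cutoff K y - cutoff K x - cutoff_slope K x * (y - x)"
    unfolding R using assms P by (intro divide_right_mono) auto
  show "cutoff K y - cutoff K x - cutoff_slope K x * (y - x) \<le> 0"
    unfolding R using assms P by simp
qed

lemma square_over_level_le:
  fixes n K V :: real
  assumes "0 \<le> n" "n \<le> 2*K + V" "1 \<le> K" "1 \<le> V"
  shows "(1 + n)\<^sup>2 / (2*K) \<le> (1 + n) * (3 + V) / 2"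
proof -
  have "(1 + n)\<^sup>2 \<le> (1 + n) * (1 + 2*K + V)"
    unfolding power2_eq_square using assms by (intro mult_left_mono) auto
  also have "\<dots> \<le> (1 + n) * (K * (3 + V))"
  proof (rule mult_left_mono)
    have "1 * V \<le> K * V" using assms by (intro mult_right_mono) auto
    then have "1 + 2*K + V \<le> 3*K + K * V" using assms by linarith
    then show "1 + 2*K + V \<le> K * (3 + V)" by (simp add: distrib_left)
  qed (use assms in simp)
  finally show ?thesis
    using assms by (simp add: field_simps)
qed

section \<open>Counting and integrability\<close>

abbreviation particle_count :: "nat \<Rightarrow> cfg \<Rightarrow> real" where
  "particle_count N \<equiv> lin_obs N (\<lambda>_ _. 1)"

lemma lin_obs_nonneg: "(\<And>i x. i \<le> 1 \<Longrightarrow> x \<in> {1..N} \<Longrightarrow> 0 \<le> v i x) \<Longrightarrow> 0 \<le> lin_obs N v \<eta>"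
  unfolding lin_obs_def by (intro add_nonneg_nonneg sum_nonneg) auto

lemma lin_obs_mono_weights:
  "(\<And>i x. i \<le> 1 \<Longrightarrow> x \<in> {1..N} \<Longrightarrow> v i x \<le> w i x) \<Longrightarrow> lin_obs N v \<eta> \<le> lin_obs N w \<eta>"
  unfolding lin_obs_def by (intro add_mono sum_mono mult_right_mono) auto

lemma occupation_le_particle_count:
  assumes "valid_cfg \<sigma> N \<eta>"
  shows "real (\<eta> i x) \<le> particle_count N \<eta>"
proof (cases "i \<le> 1 \<and> x \<in> {1..N}")
  case True
  have le: "real (\<eta> i x) \<le> (\<Sum>y\<in>{1..N}. real (\<eta> i y))"
    using True by (intro member_le_sum) auto
  have nonneg: "0 \<le> (\<Sum>y\<in>{1..N}. real (\<eta> j y))" for j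
    by (simp add: sum_nonneg)
  from True have "i = 0 \<or> i = 1" by auto
  then show ?thesis
    unfolding lin_obs_def using le nonneg[of 0] nonneg[of 1] by (elim disjE) auto
next
  case False
  then have "\<eta> i x = 0" using assms unfolding valid_cfg_def by auto
  then show ?thesis by (simp add: lin_obs_nonneg)
qed

lemma finite_valid_bounded:
  "finite {\<eta>. valid_cfg \<sigma> N \<eta> \<and> (\<forall>i x. \<eta> i x \<le> m)}"
proof -
  let ?S = "{0,1::nat} \<times> {1..N}"
  let ?A = "{\<eta>. valid_cfg \<sigma> N \<eta> \<and> (\<forall>i x. \<eta> i x \<le> m)}"
  let ?f = "\<lambda>\<eta>::cfg. restrict (\<lambda>p. \<eta> (fst p) (snd p)) ?S"
  have "inj_on ?f ?A"
  proof (rule inj_onI, intro ext)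
    fix \<eta> \<eta>' i x assume "\<eta> \<in> ?A" "\<eta>' \<in> ?A" and eq: "?f \<eta> = ?f \<eta>'"
    show "\<eta> i x = \<eta>' i x"
    proof (cases "(i, x) \<in> ?S")
      case True
      then show ?thesis using fun_cong[OF eq, of "(i, x)"] by simp
    next
      case False
      then show ?thesis using \<open>\<eta> \<in> ?A\<close> \<open>\<eta>' \<in> ?A\<close> unfolding valid_cfg_def by auto
    qed
  qed
  moreover have "?f ` ?A \<subseteq> PiE ?S (\<lambda>_. {0..m})"
    by (rule image_subsetI) (auto simp: restrict_PiE_iff)
  then have "finite (?f ` ?A)"
    by (rule finite_subset) (intro finite_PiE; simp)
  ultimately show ?thesis
    using finite_imageD by blast
qed

lemma finite_valid_count_le: "finite {\<eta>. valid_cfg \<sigma> N \<eta> \<and> particle_count N \<eta> \<le> M}"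
proof (rule finite_subset[OF _ finite_valid_bounded])
  show "{\<eta>. valid_cfg \<sigma> N \<eta> \<and> particle_count N \<eta> \<le> M}
      \<subseteq> {\<eta>. valid_cfg \<sigma> N \<eta> \<and> (\<forall>i x. \<eta> i x \<le> nat \<lceil>M\<rceil>)}"
  proof safe
    fix \<eta> i x assume "valid_cfg \<sigma> N \<eta>" "particle_count N \<eta> \<le> M"
    then have "real (\<eta> i x) \<le> M" using occupation_le_particle_count[of \<sigma> N \<eta> i x] by linarith
    then show "\<eta> i x \<le> nat \<lceil>M\<rceil>" by linarith
  qed
qed

lemma sum_list_regroup_targets:
  fixes h :: "'a \<Rightarrow> real"
  assumes "finite T" "\<And>p. p \<in> set L \<Longrightarrow> h (fst p) \<noteq> 0 \<Longrightarrow> fst p \<in> T"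
  shows "sum_list (map (\<lambda>p. snd p * h (fst p)) L)
       = (\<Sum>\<eta>\<in>T. h \<eta> * sum_list (map snd (filter (\<lambda>p. fst p = \<eta>) L)))"
  using assms(2)
proof (induction L)
  case (Cons p L)
  have head: "(if fst p \<in> T then h (fst p) * snd p else 0) = snd p * h (fst p)"
    using Cons.prems[of p] by auto
  have "(\<Sum>\<eta>\<in>T. h \<eta> * sum_list (map snd (filter (\<lambda>q. fst q = \<eta>) (p # L))))
      = (\<Sum>\<eta>\<in>T. h \<eta> * sum_list (map snd (filter (\<lambda>q. fst q = \<eta>) L)) + (if \<eta> = fst p then h \<eta> * snd p else 0))"
    by (rule sum.cong) (auto simp: algebra_simps)
  also have "\<dots> = (\<Sum>\<eta>\<in>T. h \<eta> * sum_list (map snd (filter (\<lambda>q. fst q = \<eta>) L)))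
      + (if fst p \<in> T then h (fst p) * snd p else 0)"
    using assms(1) by (simp add: sum.distrib)
  also have "\<dots> = sum_list (map (\<lambda>p. snd p * h (fst p)) L) + snd p * h (fst p)"
    using Cons.IH Cons.prems head by simp
  finally show ?case by simp
qed simp

lemma sum_weighted_pmf_le_1:
  assumes "finite A" "\<And>x. x \<in> A \<Longrightarrow> 0 \<le> t x \<and> t x \<le> 1"
  shows "(\<Sum>x\<in>A. t x * pmf \<mu> x) \<le> 1"
proof -
  have "(\<Sum>x\<in>A. t x * pmf \<mu> x) \<le> (\<Sum>x\<in>A. pmf \<mu> x)"
    using assms(2) by (intro sum_mono) (auto intro: mult_left_le_one_le)
  also have "\<dots> \<le> 1"
    using measure_measure_pmf_finite[OF assms(1), of \<mu>] measure_pmf.prob_le_1[of \<mu> A] by simp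
  finally show ?thesis .
qed

lemma integrable_pmf_finite_support:
  fixes f :: "'a \<Rightarrow> real"
  assumes "finite A" "\<And>x. x \<in> set_pmf \<mu> \<Longrightarrow> f x \<noteq> 0 \<Longrightarrow> x \<in> A"
  shows "integrable (measure_pmf \<mu>) f"
proof (rule measure_pmf.integrable_const_bound[where B="\<Sum>a\<in>A. \<bar>f a\<bar>"])
  show "AE x in measure_pmf \<mu>. norm (f x) \<le> (\<Sum>a\<in>A. \<bar>f a\<bar>)"
    unfolding AE_measure_pmf_iff
  proof
    fix x assume x: "x \<in> set_pmf \<mu>"
    show "norm (f x) \<le> (\<Sum>a\<in>A. \<bar>f a\<bar>)"
    proof (cases "f x = 0")
      case False
      then have "x \<in> A" using assms(2) x by blast
      then show ?thesis using member_le_sum[of x A "\<lambda>a. \<bar>f a\<bar>"] assms(1) by simp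
    qed (simp add: sum_nonneg)
  qed
qed simp

lemma integrable_pmf_bounded_truncations:
  fixes f g :: "'a \<Rightarrow> real"
  assumes supp: "set_pmf \<mu> \<subseteq> D"
    and fin: "\<And>k. finite {x \<in> D. g x \<le> k}"
    and nonneg: "\<And>x. x \<in> D \<Longrightarrow> 0 \<le> f x"
    and bound: "\<And>k. (\<Sum>x\<in>{x \<in> D. g x \<le> k}. f x * pmf \<mu> x) \<le> C"
  shows "integrable (measure_pmf \<mu>) f"
proof -
  define f' where "f' k x = (if x \<in> D \<and> g x \<le> real k then f x else 0)" for k x
  have int: "integrable (measure_pmf \<mu>) (f' k)" for k
    by (rule integrable_pmf_finite_support[OF fin[of "real k"]]) (auto simp: f'_def split: if_splits)
  have mean: "measure_pmf.expectation \<mu> (f' k) = (\<Sum>x\<in>{x \<in> D. g x \<le> real k}. f x * pmf \<mu> x)" for k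
    by (subst integral_measure_pmf_real[OF fin[of "real k"]]) (auto simp: f'_def intro!: sum.cong split: if_splits)
  have inc: "incseq (\<lambda>k. f' k x)" for x
    by (rule incseq_SucI) (auto simp: f'_def nonneg)
  have "incseq (\<lambda>k. measure_pmf.expectation \<mu> (f' k))"
    using inc by (intro incseq_SucI integral_mono[OF int int]) (simp add: incseq_Suc_iff)
  moreover have "bdd_above (range (\<lambda>k. measure_pmf.expectation \<mu> (f' k)))"
    using bound by (intro bdd_aboveI2) (simp add: mean)
  ultimately have lim: "(\<lambda>k. measure_pmf.expectation \<mu> (f' k)) \<longlonglongrightarrow> (SUP k. measure_pmf.expectation \<mu> (f' k))"
    by (rule LIMSEQ_incseq_SUP[rotated])
  have pointwise: "(\<lambda>k. f' k x) \<longlonglongrightarrow> f x" if "x \<in> set_pmf \<mu>" for x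
  proof (rule tendsto_eventually)
    obtain k0 :: nat where "g x \<le> real k0" using real_arch_simple by blast
    then show "\<forall>\<^sub>F k in sequentially. f' k x = f x"
      unfolding eventually_sequentially f'_def using that supp by (intro exI[of _ k0]) auto
  qed
  show ?thesis
  proof (rule integrable_monotone_convergence[OF _ _ _ lim])
    show "AE x in measure_pmf \<mu>. incseq (\<lambda>k. f' k x)"
      using inc by simp
    show "AE x in measure_pmf \<mu>. (\<lambda>k. f' k x) \<longlonglongrightarrow> f x"
      using pointwise by (simp add: AE_measure_pmf_iff)
  qed (simp_all add: int)
qed

section \<open>The switching system\<close>

lemma vector_4:
  "(vector [p, q, r, s] :: 'a::zero^4) $ 1 = p" "(vector [p, q, r, s] :: 'a::zero^4) $ 2 = q"
  "(vector [p, q, r, s] :: 'a::zero^4) $ 3 = r" "(vector [p, q, r, s] :: 'a::zero^4) $ 4 = s"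
  by (simp_all add: vector_def)

lemma Mmat_mult_vector:
  "(Mmat e g N *v z) $ 1 = z$2 + e * z$3 + e * z$4"
  "(Mmat e g N *v z) $ 2 = (1 - e) * z$1 + z$2 + ((e - 1) * alpha1 e g - e) * z$3 + ((e - 1) * alpha2 e g - e) * z$4"
  "(Mmat e g N *v z) $ 3 = (real N + 1) * z$1 + z$2 + e * alpha1 e g ^ (N+1) * z$3 + e * alpha2 e g ^ (N+1) * z$4"
  "(Mmat e g N *v z) $ 4 = (real N + e) * z$1 + z$2
      - alpha1 e g ^ N * (e * alpha1 e g + 1 - e) * z$3 - alpha2 e g ^ N * (e * alpha2 e g + 1 - e) * z$4"
  unfolding Mmat_def Let_def matrix_vector_mult_def vec_lambda_beta sum_4 vector_4 by simp_all

locale switching_system =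
  fixes \<sigma> :: int and N :: nat and \<epsilon> \<gamma> a b c d :: real
  assumes sigma_cases: "\<sigma> \<in> {-1, 0, 1}"
    and eps_pos: "0 < \<epsilon>" and eps_le_1: "\<epsilon> \<le> 1" and gamma_pos: "0 < \<gamma>" and N_ge_2: "2 \<le> N"
    and rho_nonneg: "0 \<le> a" "0 \<le> b" "0 \<le> c" "0 \<le> d"
    and rho_le_1: "\<sigma> = -1 \<longrightarrow> a \<le> 1 \<and> b \<le> 1 \<and> c \<le> 1 \<and> d \<le> 1"
begin

abbreviation jumps :: "cfg \<Rightarrow> (cfg \<times> real) list" where
  "jumps \<xi> \<equiv> transitions \<sigma> N \<epsilon> \<gamma> (\<lambda>i. if i = 0 then a else b) (\<lambda>i. if i = 0 then c else d) \<xi>"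

abbreviation valid :: "cfg \<Rightarrow> bool" where
  "valid \<xi> \<equiv> valid_cfg \<sigma> N \<xi>"

lemma jumps_cases:
  assumes "p \<in> set (jumps \<xi>)"
  obtains (move) i x j y s where "i \<le> 1" "x \<in> {1..N}" "j \<le> 1" "y \<in> {1..N}" "(i, x) \<noteq> (j, y)"
      "p = (move_p \<xi> i x j y, s * real (\<xi> i x) * (1 + of_int \<sigma> * real (\<xi> j y)))" "0 \<le> s" "s \<le> max 1 \<gamma>"
  | (rem) i x r where "i \<le> 1" "x \<in> {1..N}" "p = (rem_p \<xi> i x, real (\<xi> i x) * (1 + of_int \<sigma> * r))"
      "0 \<le> r" "r \<le> a + b + c + d" "\<sigma> = -1 \<longrightarrow> r \<le> 1"
  | (add) i x r where "i \<le> 1" "x \<in> {1..N}" "p = (add_p \<xi> i x, r * (1 + of_int \<sigma> * real (\<xi> i x)))"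
      "0 \<le> r" "r \<le> a + b + c + d" "\<sigma> = -1 \<longrightarrow> r \<le> 1"
proof -
  have eps_pow: "0 \<le> \<epsilon>^i \<and> \<epsilon>^i \<le> max 1 \<gamma>" if "i \<in> {0,1}" for i :: nat
    using that eps_pos eps_le_1 by auto
  from assms show ?thesis
  proof (cases rule: transitions_cases)
    case (bulk i x)
    then have i: "i \<le> 1" "0 \<le> \<epsilon>^i" "\<epsilon>^i \<le> max 1 \<gamma>" and x: "x \<in> {1..N}" "x + 1 \<in> {1..N}"
      using eps_pow by auto
    from bulk(3) show ?thesis
    proof
      assume "p = (move_p \<xi> i x i (x+1), \<epsilon>^i * real (\<xi> i x) * (1 + of_int \<sigma> * real (\<xi> i (x+1))))"
      from i(1) x(1) i(1) x(2) _ this i(2,3) show ?thesis by (rule move) simp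
    next
      assume "p = (move_p \<xi> i (x+1) i x, \<epsilon>^i * real (\<xi> i (x+1)) * (1 + of_int \<sigma> * real (\<xi> i x)))"
      from i(1) x(2) i(1) x(1) _ this i(2,3) show ?thesis by (rule move) simp
    qed
  next
    case (switch i x)
    then have "i \<le> 1" "1 - i \<le> 1" "(i, x) \<noteq> (1 - i, x)" "0 \<le> \<gamma>" "\<gamma> \<le> max 1 \<gamma>"
      using gamma_pos by auto
    from this(1) switch(2) this(2) switch(2) this(3) switch(3) this(4,5) show ?thesis
      by (rule move)
  next
    case (reservoir i y r)
    then have "i \<le> 1" "y \<in> {1..N}" "0 \<le> r" "r \<le> a + b + c + d" "\<sigma> = -1 \<longrightarrow> r \<le> 1"
      using N_ge_2 rho_nonneg rho_le_1 by auto
    note bounds = this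
    from reservoir(3) show ?thesis
    proof
      assume "p = (rem_p \<xi> i y, real (\<xi> i y) * (1 + of_int \<sigma> * r))"
      from bounds(1,2) this bounds(3-5) show ?thesis by (rule rem)
    next
      assume "p = (add_p \<xi> i y, r * (1 + of_int \<sigma> * real (\<xi> i y)))"
      from bounds(1,2) this bounds(3-5) show ?thesis by (rule add)
    qed
  qed
qed

lemma interaction_factor_bounds:
  fixes k :: real
  assumes "0 \<le> k" "\<sigma> = -1 \<longrightarrow> k \<le> 1"
  shows "0 \<le> 1 + of_int \<sigma> * k" "1 + of_int \<sigma> * k \<le> 1 + k"
  using sigma_cases assms by auto

lemma valid_occupation_le_1: "valid \<xi> \<Longrightarrow> \<sigma> = -1 \<Longrightarrow> \<xi> i x \<le> 1"
  unfolding valid_cfg_def by auto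

lemma occupation_factor_bounds:
  assumes "valid \<xi>"
  shows "0 \<le> 1 + of_int \<sigma> * real (\<xi> i x)" "1 + of_int \<sigma> * real (\<xi> i x) \<le> 1 + real (\<xi> i x)"
  using interaction_factor_bounds[of "real (\<xi> i x)"] valid_occupation_le_1[OF assms] by auto

lemma valid_rem_p: "valid \<xi> \<Longrightarrow> valid (rem_p \<xi> i x)"
  unfolding valid_cfg_def rem_p_def by auto

lemma valid_add_p:
  "valid \<xi> \<Longrightarrow> i \<le> 1 \<Longrightarrow> x \<in> {1..N} \<Longrightarrow> (\<sigma> = -1 \<longrightarrow> \<xi> i x = 0) \<Longrightarrow> valid (add_p \<xi> i x)"
  unfolding valid_cfg_def add_p_def by auto

lemma valid_move_p:
  assumes "valid \<xi>" "j \<le> 1" "y \<in> {1..N}" "(i, x) \<noteq> (j, y)" "\<sigma> = -1 \<longrightarrow> \<xi> j y = 0"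
  shows "valid (move_p \<xi> i x j y)"
proof -
  have "rem_p \<xi> i x j y = \<xi> j y" using assms(4) unfolding rem_p_def by auto
  then show ?thesis
    unfolding move_p_def using valid_add_p[OF valid_rem_p[OF assms(1)] assms(2,3)] assms(5) by simp
qed

lemma jump_rate_nonneg:
  assumes "valid \<xi>" "p \<in> set (jumps \<xi>)"
  shows "0 \<le> snd p"
  using assms(2)
proof (cases rule: jumps_cases)
  case (move i x j y s)
  then show ?thesis using occupation_factor_bounds[OF assms(1), of j y] by simp
next
  case (rem i x r)
  then show ?thesis using interaction_factor_bounds[of r] by simp
next
  case (add i x r)
  then show ?thesis using occupation_factor_bounds[OF assms(1), of i x] by simp
qed

text \<open>In the exclusion case a jump onto an occupied site has rate \<open>0\<close>, so every jump of positive
  rate stays among valid configurations.\<close>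

lemma jump_target_valid:
  assumes "valid \<xi>" "p \<in> set (jumps \<xi>)" "snd p \<noteq> 0"
  shows "valid (fst p)"
  using assms(2)
proof (cases rule: jumps_cases)
  case (move i x j y s)
  then have "\<sigma> = -1 \<longrightarrow> \<xi> j y = 0"
    using assms(3) valid_occupation_le_1[OF assms(1), of j y] by (auto simp: le_Suc_eq)
  then show ?thesis using valid_move_p[OF assms(1) move(3-5)] move by simp
next
  case (rem i x r)
  then show ?thesis using valid_rem_p[OF assms(1)] by simp
next
  case (add i x r)
  then have "\<sigma> = -1 \<longrightarrow> \<xi> i x = 0"
    using assms(3) valid_occupation_le_1[OF assms(1), of i x] by (auto simp: le_Suc_eq)
  then show ?thesis using valid_add_p[OF assms(1) add(1,2)] add by simp
qed

lemma lin_obs_jump_bound: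
  assumes "p \<in> set (jumps \<xi>)" "\<And>i x. i \<le> 1 \<Longrightarrow> x \<in> {1..N} \<Longrightarrow> 0 \<le> v i x \<and> v i x \<le> V"
  shows "\<bar>lin_obs N v (fst p) - lin_obs N v \<xi>\<bar> \<le> V"
  using assms(1)
proof (cases rule: jumps_cases)
  case (move i x j y s)
  then show ?thesis using lin_obs_move_p[OF move(1-4), of v \<xi>] assms(2)[of i x] assms(2)[of j y] by auto
next
  case (rem i x r)
  then show ?thesis using lin_obs_rem_p[OF rem(1,2), of v \<xi>] assms(2)[of i x] by auto
next
  case (add i x r)
  then show ?thesis using lin_obs_add_p[OF add(1,2), of v \<xi>] assms(2)[of i x] by auto
qed

lemma particle_count_jump: "p \<in> set (jumps \<xi>) \<Longrightarrow> particle_count N \<xi> \<le> particle_count N (fst p) + 1"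
  using lin_obs_jump_bound[of p \<xi> "\<lambda>_ _. 1" 1] by auto

definition rate_const :: real where
  "rate_const = max 1 \<gamma> + a + b + c + d + 1"

lemma jump_rate_le:
  assumes "valid \<xi>" "p \<in> set (jumps \<xi>)"
  shows "snd p \<le> rate_const * (1 + particle_count N \<xi>)\<^sup>2"
proof -
  let ?n = "particle_count N \<xi>"
  have n: "0 \<le> ?n" "real (\<xi> i x) \<le> ?n" for i x
    using lin_obs_nonneg occupation_le_particle_count[OF assms(1)] by auto
  have prod_le: "u * v * w \<le> rate_const * (1 + ?n) * (1 + ?n)"
    if "0 \<le> u" "u \<le> rate_const" "0 \<le> v" "v \<le> 1 + ?n" "0 \<le> w" "w \<le> 1 + ?n" for u v w
    using that by (intro mult_mono) (auto intro: order_trans)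
  have const: "max 1 \<gamma> \<le> rate_const" "1 + (a + b + c + d) \<le> rate_const"
    using rho_nonneg unfolding rate_const_def by auto
  from assms(2) have "snd p \<le> rate_const * (1 + ?n) * (1 + ?n)"
  proof (cases rule: jumps_cases)
    case (move i x j y s)
    moreover have "1 + of_int \<sigma> * real (\<xi> j y) \<le> 1 + ?n"
      using occupation_factor_bounds(2)[OF assms(1), of j y] n(2)[of j y] by linarith
    ultimately show ?thesis
      using occupation_factor_bounds(1)[OF assms(1), of j y] n(1) n(2)[of i x] const
      by (simp, intro prod_le) auto
  next
    case (rem i x r)
    have "1 + of_int \<sigma> * r \<le> rate_const"
      using interaction_factor_bounds(2)[OF rem(4,6)] rem(5) const by linarith
    moreover have "real (\<xi> i x) \<le> 1 + ?n" using n(2)[of i x] by linarith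
    ultimately have "(1 + of_int \<sigma> * r) * real (\<xi> i x) * 1 \<le> rate_const * (1 + ?n) * (1 + ?n)"
      using interaction_factor_bounds(1)[OF rem(4,6)] n(1) by (intro prod_le) auto
    then show ?thesis using rem(3) by (simp add: ac_simps)
  next
    case (add i x r)
    have "r \<le> rate_const" using add(5) const by linarith
    moreover have "1 + of_int \<sigma> * real (\<xi> i x) \<le> 1 + ?n"
      using occupation_factor_bounds(2)[OF assms(1), of i x] n(2)[of i x] by linarith
    ultimately have "r * (1 + of_int \<sigma> * real (\<xi> i x)) * 1 \<le> rate_const * (1 + ?n) * (1 + ?n)"
      using occupation_factor_bounds(1)[OF assms(1), of i x] add(4) n(1) by (intro prod_le) auto
    then show ?thesis using add(3) by simp
  qed
  then show ?thesis by (simp add: power2_eq_square)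
qed

lemma length_jumps: "length (jumps \<xi>) = 6 * N + 4"
proof -
  have "sum_list (map f [Suc 0..<N]) = sum f {1..<N}" for f :: "nat \<Rightarrow> nat"
    by (simp add: sum_set_upt_conv_sum_list_nat[symmetric])
  then show ?thesis
    using N_ge_2 unfolding transitions_def by (simp del: upt_Suc add: length_concat comp_def)
qed

subsection \<open>The explicit profile\<close>

abbreviation "\<alpha>\<^sub>1 \<equiv> alpha1 \<epsilon> \<gamma>"
abbreviation "\<alpha>\<^sub>2 \<equiv> alpha2 \<epsilon> \<gamma>"

lemma alpha_roots:
  shows "0 < \<alpha>\<^sub>1" "0 < \<alpha>\<^sub>2" "\<alpha>\<^sub>1 \<noteq> \<alpha>\<^sub>2"
    and "\<epsilon> * (\<alpha>\<^sub>1 - 1)\<^sup>2 = \<gamma> * (1 + \<epsilon>) * \<alpha>\<^sub>1" "\<epsilon> * (\<alpha>\<^sub>2 - 1)\<^sup>2 = \<gamma> * (1 + \<epsilon>) * \<alpha>\<^sub>2"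
proof -
  define s where "s = 1 + \<gamma>/2 * (1 + 1/\<epsilon>)"
  define r where "r = sqrt (s\<^sup>2 - 1)"
  have "1 < s" unfolding s_def using gamma_pos eps_pos by (simp add: add_pos_pos)
  then have s2: "1 < s\<^sup>2" by (simp add: power_less_one_iff less_1_mult power2_eq_square)
  then have r2: "r\<^sup>2 = s\<^sup>2 - 1" and r0: "0 < r" unfolding r_def by simp_all
  have a1: "\<alpha>\<^sub>1 = s - r" and a2: "\<alpha>\<^sub>2 = s + r" unfolding alpha1_def alpha2_def s_def r_def by simp_all
  have "\<alpha>\<^sub>1 * \<alpha>\<^sub>2 = 1" unfolding a1 a2 using r2 by (simp add: algebra_simps power2_eq_square)
  moreover show "0 < \<alpha>\<^sub>2" using a2 \<open>1 < s\<close> r0 by simp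
  ultimately show "0 < \<alpha>\<^sub>1" by (metis zero_less_mult_pos2 zero_less_one)
  show "\<alpha>\<^sub>1 \<noteq> \<alpha>\<^sub>2" unfolding a1 a2 using r0 by simp
  have es: "2 * \<epsilon> * s = 2 * \<epsilon> + \<gamma> * (1 + \<epsilon>)" unfolding s_def using eps_pos by (simp add: field_simps)
  have root: "\<epsilon> * (\<alpha> - 1)\<^sup>2 = \<gamma> * (1 + \<epsilon>) * \<alpha>" if "\<alpha> = s - r \<or> \<alpha> = s + r" for \<alpha>
  proof -
    have "\<alpha>\<^sup>2 - 2 * s * \<alpha> + 1 = 0"
      using that r2 by (auto simp: algebra_simps power2_eq_square)
    moreover have "\<epsilon> * (\<alpha> - 1)\<^sup>2 - \<gamma> * (1 + \<epsilon>) * \<alpha>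
        = \<epsilon> * (\<alpha>\<^sup>2 - 2 * s * \<alpha> + 1) + \<alpha> * (2 * \<epsilon> * s - 2 * \<epsilon> - \<gamma> * (1 + \<epsilon>))"
      by (simp add: algebra_simps power2_eq_square)
    ultimately show ?thesis using es by simp
  qed
  show "\<epsilon> * (\<alpha>\<^sub>1 - 1)\<^sup>2 = \<gamma> * (1 + \<epsilon>) * \<alpha>\<^sub>1" "\<epsilon> * (\<alpha>\<^sub>2 - 1)\<^sup>2 = \<gamma> * (1 + \<epsilon>) * \<alpha>\<^sub>2"
    using root a1 a2 by simp_all
qed

definition profile :: "real^4 \<Rightarrow> nat \<Rightarrow> nat \<Rightarrow> real" where
  "profile z i x = (if i = 0 then z$1 * real x + z$2 + \<epsilon> * z$3 * \<alpha>\<^sub>1^x + \<epsilon> * z$4 * \<alpha>\<^sub>2^x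
                    else z$1 * real x + z$2 - z$3 * \<alpha>\<^sub>1^x - z$4 * \<alpha>\<^sub>2^x)"

text \<open>The exponentials \<open>\<alpha>\<^sup>x\<close> solve the bulk equations because \<open>\<alpha>\<^sub>1, \<alpha>\<^sub>2\<close> are the roots of
  \<open>\<epsilon> (\<alpha> - 1)\<^sup>2 = \<gamma> (1 + \<epsilon>) \<alpha>\<close>; the affine part solves them trivially.\<close>

lemma profile_harmonic:
  assumes "1 \<le> x"
  shows "((profile z 0 (x-1) - profile z 0 x) - (profile z 0 x - profile z 0 (x+1))) + \<gamma> * (profile z 1 x - profile z 0 x) = 0"
    and "\<epsilon> * ((profile z 1 (x-1) - profile z 1 x) - (profile z 1 x - profile z 1 (x+1))) + \<gamma> * (profile z 0 x - profile z 1 x) = 0"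
proof -
  obtain m where m: "x = Suc m" using assms by (cases x) auto
  have R: "\<epsilon> * (\<alpha>\<^sub>1 - 1)\<^sup>2 - \<gamma> * (1 + \<epsilon>) * \<alpha>\<^sub>1 = 0" "\<epsilon> * (\<alpha>\<^sub>2 - 1)\<^sup>2 - \<gamma> * (1 + \<epsilon>) * \<alpha>\<^sub>2 = 0"
    using alpha_roots by simp_all
  have "((profile z 0 (x-1) - profile z 0 x) - (profile z 0 x - profile z 0 (x+1))) + \<gamma> * (profile z 1 x - profile z 0 x)
     = z$3 * \<alpha>\<^sub>1^m * (\<epsilon> * (\<alpha>\<^sub>1 - 1)\<^sup>2 - \<gamma> * (1 + \<epsilon>) * \<alpha>\<^sub>1) + z$4 * \<alpha>\<^sub>2^m * (\<epsilon> * (\<alpha>\<^sub>2 - 1)\<^sup>2 - \<gamma> * (1 + \<epsilon>) * \<alpha>\<^sub>2)"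
    unfolding profile_def m by (simp add: algebra_simps power2_eq_square)
  then show "((profile z 0 (x-1) - profile z 0 x) - (profile z 0 x - profile z 0 (x+1))) + \<gamma> * (profile z 1 x - profile z 0 x) = 0"
    using R by simp
  have "\<epsilon> * ((profile z 1 (x-1) - profile z 1 x) - (profile z 1 x - profile z 1 (x+1))) + \<gamma> * (profile z 0 x - profile z 1 x)
     = - z$3 * \<alpha>\<^sub>1^m * (\<epsilon> * (\<alpha>\<^sub>1 - 1)\<^sup>2 - \<gamma> * (1 + \<epsilon>) * \<alpha>\<^sub>1) - z$4 * \<alpha>\<^sub>2^m * (\<epsilon> * (\<alpha>\<^sub>2 - 1)\<^sup>2 - \<gamma> * (1 + \<epsilon>) * \<alpha>\<^sub>2)"
    unfolding profile_def m by (simp add: algebra_simps power2_eq_square)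
  then show "\<epsilon> * ((profile z 1 (x-1) - profile z 1 x) - (profile z 1 x - profile z 1 (x+1))) + \<gamma> * (profile z 0 x - profile z 1 x) = 0"
    using R by simp
qed

text \<open>This is where \<open>M\<^sub>\<epsilon>\<close> comes from: its rows are the four boundary conditions.\<close>

lemma drift_form_profile:
  "drift_form \<epsilon> \<gamma> N 0 0 0 0 (profile z) v =
     - (Mmat \<epsilon> \<gamma> N *v z)$1 * v 0 1 - (Mmat \<epsilon> \<gamma> N *v z)$2 * v 1 1
     - (Mmat \<epsilon> \<gamma> N *v z)$3 * v 0 N - (Mmat \<epsilon> \<gamma> N *v z)$4 * v 1 N"
proof -
  have N: "1 \<le> N" using N_ge_2 by simp
  have bulk: "(\<Sum>x\<in>{1..N}. v 0 x * (((profile z 0 (x-1) - profile z 0 x) - (profile z 0 x - profile z 0 (x+1)))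
                 + \<gamma> * (profile z 1 x - profile z 0 x))
               + v 1 x * (\<epsilon> * ((profile z 1 (x-1) - profile z 1 x) - (profile z 1 x - profile z 1 (x+1)))
                 + \<gamma> * (profile z 0 x - profile z 1 x))) = 0"
    by (intro sum.neutral ballI, unfold atLeastAtMost_iff, elim conjE)
      (simp only: profile_harmonic mult_zero_right add_0_right)
  show ?thesis
    unfolding drift_form_green[OF N] bulk Mmat_mult_vector
    by (simp add: profile_def algebra_simps)
qed

lemma drift_form_nondegenerate:
  assumes "\<And>v. drift_form \<epsilon> \<gamma> N 0 0 0 0 u v = 0" and "i \<le> 1" "x \<in> {1..N}"
  shows "u i x = 0"
proof -
  let ?T0 = "\<Sum>x\<in>{1..<N}. (u 0 x - u 0 (x+1))\<^sup>2" and ?T1 = "\<Sum>x\<in>{1..<N}. (u 1 x - u 1 (x+1))\<^sup>2"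
    and ?T2 = "\<Sum>x\<in>{1..N}. (u 0 x - u 1 x)\<^sup>2"
  have T: "0 \<le> ?T0" "0 \<le> \<epsilon> * ?T1" "0 \<le> \<gamma> * ?T2"
    using eps_pos gamma_pos by (auto intro!: sum_nonneg mult_nonneg_nonneg)
  have "?T0 + \<epsilon> * ?T1 + \<gamma> * ?T2 + (u 0 1)\<^sup>2 + (u 1 1)\<^sup>2 + (u 0 N)\<^sup>2 + (u 1 N)\<^sup>2 = 0"
    using assms(1)[of u] unfolding drift_form_self by simp
  then have "?T0 = 0" "\<epsilon> * ?T1 = 0" "(u 0 1)\<^sup>2 = 0" "(u 1 1)\<^sup>2 = 0"
    using T zero_le_power2[of "u 0 1"] zero_le_power2[of "u 1 1"]
      zero_le_power2[of "u 0 N"] zero_le_power2[of "u 1 N"] by linarith+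
  then have "?T0 = 0" "?T1 = 0" "u 0 1 = 0" "u 1 1 = 0"
    using eps_pos by simp_all
  then have "u 0 x = 0" "u 1 x = 0"
    using sum_sq_increments_eq_0_imp_const[OF _ assms(3)] by metis+
  then show ?thesis using assms(2) by (cases i) auto
qed

text \<open>Injectivity follows from uniqueness: \<open>M\<^sub>\<epsilon> z = 0\<close> makes \<open>profile z\<close> a solution with zero
  reservoirs, hence zero at the sites \<open>1, 2\<close>, which forces \<open>z = 0\<close>.\<close>

lemma Mmat_injective:
  assumes "Mmat \<epsilon> \<gamma> N *v z = 0"
  shows "z = 0"
proof -
  have "drift_form \<epsilon> \<gamma> N 0 0 0 0 (profile z) v = 0" for v
    unfolding drift_form_profile using assms by simp
  then have p: "profile z i x = 0" if "i \<le> 1" "x \<in> {1..N}" for i x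
    using drift_form_nondegenerate that by blast
  have "profile z 0 1 - profile z 1 1 = 0" "profile z 0 2 - profile z 1 2 = 0"
    "profile z 0 1 + \<epsilon> * profile z 1 1 = 0" "profile z 0 2 + \<epsilon> * profile z 1 2 = 0"
    using p N_ge_2 by auto
  moreover have "1 + \<epsilon> \<noteq> 0" using eps_pos by simp
  ultimately have e: "z$3 * \<alpha>\<^sub>1 + z$4 * \<alpha>\<^sub>2 = 0" "z$3 * \<alpha>\<^sub>1\<^sup>2 + z$4 * \<alpha>\<^sub>2\<^sup>2 = 0"
    "z$1 + z$2 = 0" "2 * z$1 + z$2 = 0"
    unfolding profile_def by (simp_all add: algebra_simps, algebra+)
  have "z$4 * \<alpha>\<^sub>2 * (\<alpha>\<^sub>2 - \<alpha>\<^sub>1) = (z$3 * \<alpha>\<^sub>1\<^sup>2 + z$4 * \<alpha>\<^sub>2\<^sup>2) - \<alpha>\<^sub>1 * (z$3 * \<alpha>\<^sub>1 + z$4 * \<alpha>\<^sub>2)"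
    by (simp add: algebra_simps power2_eq_square)
  then have "z$4 * \<alpha>\<^sub>2 * (\<alpha>\<^sub>2 - \<alpha>\<^sub>1) = 0" using e by simp
  then have "z$4 = 0" using alpha_roots(2,3) by simp
  then have "z$3 = 0" "z$1 = 0" "z$2 = 0" using e alpha_roots(1) by auto
  with \<open>z$4 = 0\<close> show ?thesis
    unfolding vec_eq_iff by (metis exhaust_4 zero_index)
qed

lemma Mmat_matrix_inv: "Mmat \<epsilon> \<gamma> N *v (matrix_inv (Mmat \<epsilon> \<gamma> N) *v y) = y"
proof -
  let ?M = "Mmat \<epsilon> \<gamma> N"
  have "\<exists>B. B ** ?M = mat 1"
    unfolding matrix_left_invertible_ker using Mmat_injective by blast
  then obtain B where B: "B ** ?M = mat 1" by blast
  then have "?M ** B = mat 1" using matrix_left_right_inverse by blast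
  with B have "\<exists>A'. ?M ** A' = mat 1 \<and> A' ** ?M = mat 1" by blast
  then have "?M ** matrix_inv ?M = mat 1"
    unfolding matrix_inv_def by (rule someI_ex[THEN conjunct1])
  then show ?thesis by (simp add: matrix_vector_mul_assoc)
qed

end

section \<open>Stationary expectations\<close>

locale stationary_switching_system = switching_system +
  fixes \<mu> :: "cfg pmf"
  assumes stationary: "stationary \<sigma> N \<epsilon> \<gamma> (\<lambda>i. if i = 0 then a else b) (\<lambda>i. if i = 0 then c else d) \<mu>"
begin

abbreviation rate_to :: "cfg \<Rightarrow> cfg \<Rightarrow> real" where
  "rate_to \<xi> \<eta> \<equiv> jump_rate \<sigma> N \<epsilon> \<gamma> (\<lambda>i. if i = 0 then a else b) (\<lambda>i. if i = 0 then c else d) \<xi> \<eta>"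

abbreviation out_rate :: "cfg \<Rightarrow> real" where
  "out_rate \<eta> \<equiv> exit_rate \<sigma> N \<epsilon> \<gamma> (\<lambda>i. if i = 0 then a else b) (\<lambda>i. if i = 0 then c else d) \<eta>"

lemma valid_if_in_support: "\<xi> \<in> set_pmf \<mu> \<Longrightarrow> valid \<xi>"
  using stationary unfolding stationary_def by auto

lemma balance_finite_predecessors:
  assumes "valid \<eta>" "finite F"
    and pred: "\<And>\<xi>. valid \<xi> \<Longrightarrow> rate_to \<xi> \<eta> \<noteq> 0 \<Longrightarrow> \<xi> \<in> F"
  shows "(\<Sum>\<xi>\<in>F. pmf \<mu> \<xi> * rate_to \<xi> \<eta>) = pmf \<mu> \<eta> * out_rate \<eta>"
proof -
  have "(\<Sum>\<xi>\<in>F. pmf \<mu> \<xi> * rate_to \<xi> \<eta>) = infsum (\<lambda>\<xi>. pmf \<mu> \<xi> * rate_to \<xi> \<eta>) UNIV"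
  proof (subst infsum_finite[OF assms(2), symmetric], rule infsum_cong_neutral)
    fix \<xi> assume "\<xi> \<in> UNIV - F"
    then show "pmf \<mu> \<xi> * rate_to \<xi> \<eta> = 0"
      using pred valid_if_in_support by (auto simp: set_pmf_iff)
  qed auto
  also have "\<dots> = pmf \<mu> \<eta> * out_rate \<eta>"
    using stationary assms(1) unfolding stationary_def by auto
  finally show ?thesis .
qed

lemma jump_rate_nonzero_imp_jump:
  assumes "rate_to \<xi> \<eta> \<noteq> 0"
  obtains p where "p \<in> set (jumps \<xi>)" "fst p = \<eta>"
proof -
  from assms have "filter (\<lambda>p. fst p = \<eta>) (jumps \<xi>) \<noteq> []"
    unfolding jump_rate_def by auto
  then show ?thesis
    using that by (auto simp: filter_empty_conv)
qed

lemma generator_outside: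
  assumes "\<And>\<eta>. h \<eta> \<noteq> 0 \<Longrightarrow> particle_count N \<eta> \<le> M" "M + 1 < particle_count N \<xi>"
  shows "generator (jumps \<xi>) h \<xi> = 0"
proof -
  have "h \<xi> = 0"
    using assms(1)[of \<xi>] assms(2) by (cases "h \<xi> = 0") auto
  moreover have "h (fst p) = 0" if "p \<in> set (jumps \<xi>)" for p
    using particle_count_jump[OF that] assms(1)[of "fst p"] assms(2) by (cases "h (fst p) = 0") auto
  ultimately have "map (\<lambda>p. snd p * (h (fst p) - h \<xi>)) (jumps \<xi>) = map (\<lambda>_. 0) (jumps \<xi>)"
    by (intro map_cong) auto
  then show ?thesis
    unfolding generator_def by (simp only: sum_list_0)
qed

text \<open>Jumps change the particle number by at most one, so for \<open>h\<close> with finite support only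
  finitely many configurations enter and the balance equations can be summed against \<open>h\<close>.\<close>

lemma expectation_generator_bounded_support:
  assumes h: "\<And>\<eta>. h \<eta> \<noteq> 0 \<Longrightarrow> valid \<eta> \<and> particle_count N \<eta> \<le> M"
  shows "measure_pmf.expectation \<mu> (\<lambda>\<xi>. generator (jumps \<xi>) h \<xi>) = 0"
proof -
  define T where "T = {\<eta>. valid \<eta> \<and> particle_count N \<eta> \<le> M}"
  define F where "F = {\<eta>. valid \<eta> \<and> particle_count N \<eta> \<le> M + 1}"
  have finT: "finite T" and finF: "finite F" and TF: "T \<subseteq> F"
    unfolding T_def F_def by (auto intro: finite_valid_count_le)
  have hT: "\<And>\<eta>. \<eta> \<notin> T \<Longrightarrow> h \<eta> = 0" using h unfolding T_def by blast
  have mean: "measure_pmf.expectation \<mu> (\<lambda>\<xi>. generator (jumps \<xi>) h \<xi>)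
      = (\<Sum>\<xi>\<in>F. generator (jumps \<xi>) h \<xi> * pmf \<mu> \<xi>)"
  proof (rule integral_measure_pmf_real[OF finF])
    fix \<xi> assume "\<xi> \<in> set_pmf \<mu>" "generator (jumps \<xi>) h \<xi> \<noteq> 0"
    then show "\<xi> \<in> F"
      using generator_outside[of h M \<xi>] h valid_if_in_support unfolding F_def by force
  qed
  have split: "generator (jumps \<xi>) h \<xi> = (\<Sum>\<eta>\<in>T. h \<eta> * rate_to \<xi> \<eta>) - out_rate \<xi> * h \<xi>" for \<xi>
    unfolding generator_split jump_rate_def exit_rate_def
    by (subst sum_list_regroup_targets[OF finT]) (use hT in auto)
  have inflow: "(\<Sum>\<xi>\<in>F. pmf \<mu> \<xi> * rate_to \<xi> \<eta>) = pmf \<mu> \<eta> * out_rate \<eta>" if "\<eta> \<in> T" for \<eta>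
  proof (rule balance_finite_predecessors[OF _ finF])
    fix \<xi> assume "valid \<xi>" "rate_to \<xi> \<eta> \<noteq> 0"
    then show "\<xi> \<in> F"
      using that particle_count_jump unfolding T_def F_def
      by (elim jump_rate_nonzero_imp_jump) fastforce
  qed (use that T_def in auto)
  have "(\<Sum>\<xi>\<in>F. generator (jumps \<xi>) h \<xi> * pmf \<mu> \<xi>)
     = (\<Sum>\<eta>\<in>T. h \<eta> * (\<Sum>\<xi>\<in>F. pmf \<mu> \<xi> * rate_to \<xi> \<eta>)) - (\<Sum>\<xi>\<in>F. pmf \<mu> \<xi> * out_rate \<xi> * h \<xi>)"
    unfolding split
    by (simp add: sum_subtractf sum_distrib_left sum_distrib_right sum.swap[of _ F] algebra_simps)
  also have "\<dots> = (\<Sum>\<eta>\<in>T. h \<eta> * (pmf \<mu> \<eta> * out_rate \<eta>)) - (\<Sum>\<xi>\<in>T. pmf \<mu> \<xi> * out_rate \<xi> * h \<xi>)"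
    using inflow sum.mono_neutral_right[OF finF TF, of "\<lambda>\<xi>. pmf \<mu> \<xi> * out_rate \<xi> * h \<xi>"] hT by simp
  finally show ?thesis
    unfolding mean by (simp add: algebra_simps)
qed

definition bounded_weights :: "(nat \<Rightarrow> nat \<Rightarrow> real) \<Rightarrow> real \<Rightarrow> bool" where
  "bounded_weights v V \<longleftrightarrow> (\<forall>i x. i \<le> 1 \<longrightarrow> x \<in> {1..N} \<longrightarrow> 1 \<le> v i x \<and> v i x \<le> V)"

text \<open>A linear observable is unbounded, so \<open>E[L (lin_obs N v)] = 0\<close> is obtained through the
  finitely supported truncations \<open>cutoff K \<circ> lin_obs N v\<close>, shifted to vanish far out, as \<open>K \<rightarrow> \<infinity>\<close>.\<close>

definition cutoff_obs :: "(nat \<Rightarrow> nat \<Rightarrow> real) \<Rightarrow> real \<Rightarrow> cfg \<Rightarrow> real" where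
  "cutoff_obs v K \<eta> = (if valid \<eta> then cutoff K (lin_obs N v \<eta>) - 3*K/2 else 0)"

abbreviation drift :: "cfg \<Rightarrow> (nat \<Rightarrow> nat \<Rightarrow> real) \<Rightarrow> real" where
  "drift \<xi> v \<equiv> drift_form \<epsilon> \<gamma> N a b c d (\<lambda>i x. real (\<xi> i x)) v"

lemma generator_jumps_lin_obs: "generator (jumps \<xi>) (lin_obs N v) \<xi> = drift \<xi> v"
  using generator_lin_obs[of N \<sigma> \<epsilon> \<gamma> "\<lambda>i. if i = 0 then a else b" "\<lambda>i. if i = 0 then c else d" \<xi> v] N_ge_2
  by simp

lemma bounded_weights_jump:
  assumes "bounded_weights v V" "p \<in> set (jumps \<xi>)"
  shows "\<bar>lin_obs N v (fst p) - lin_obs N v \<xi>\<bar> \<le> V"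
proof (rule lin_obs_jump_bound[OF assms(2)])
  fix i x :: nat assume "i \<le> 1" "x \<in> {1..N}"
  then have "1 \<le> v i x \<and> v i x \<le> V" using assms(1) unfolding bounded_weights_def by blast
  then show "0 \<le> v i x \<and> v i x \<le> V" by simp
qed

lemma bounded_weights_count_le: "bounded_weights v V \<Longrightarrow> particle_count N \<eta> \<le> lin_obs N v \<eta>"
  by (rule lin_obs_mono_weights) (auto simp: bounded_weights_def)

lemma bounded_weights_ge_1:
  assumes "bounded_weights v V"
  shows "1 \<le> V"
proof -
  have "1 \<le> v 0 1 \<and> v 0 1 \<le> V" using assms N_ge_2 unfolding bounded_weights_def by auto
  then show ?thesis by linarith
qed

lemma expectation_generator_cutoff_obs:
  assumes "bounded_weights v V" "0 < K"
  shows "measure_pmf.expectation \<mu> (\<lambda>\<xi>. generator (jumps \<xi>) (cutoff_obs v K) \<xi>) = 0"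
proof (rule expectation_generator_bounded_support)
  fix \<eta> assume "cutoff_obs v K \<eta> \<noteq> 0"
  then have "valid \<eta>" "\<not> 2*K \<le> lin_obs N v \<eta>"
    using cutoff_eq_const[OF assms(2), of "lin_obs N v \<eta>"] unfolding cutoff_obs_def
    by (auto split: if_splits)
  then show "valid \<eta> \<and> particle_count N \<eta> \<le> 2*K"
    using bounded_weights_count_le[OF assms(1), of \<eta>] by simp
qed

lemma generator_cutoff_obs:
  assumes "valid \<xi>"
  shows "generator (jumps \<xi>) (cutoff_obs v K) \<xi>
       = sum_list (map (\<lambda>p. snd p * (cutoff K (lin_obs N v (fst p)) - cutoff K (lin_obs N v \<xi>))) (jumps \<xi>))"
  unfolding generator_def
proof (intro arg_cong[where f=sum_list] map_cong refl)
  fix p assume p: "p \<in> set (jumps \<xi>)"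
  show "snd p * (cutoff_obs v K (fst p) - cutoff_obs v K \<xi>)
      = snd p * (cutoff K (lin_obs N v (fst p)) - cutoff K (lin_obs N v \<xi>))"
    using assms jump_target_valid[OF assms p] unfolding cutoff_obs_def by (cases "snd p = 0") auto
qed

lemma generator_cutoff_obs_le:
  assumes "valid \<xi>" "0 < K"
  shows "generator (jumps \<xi>) (cutoff_obs v K) \<xi> \<le> cutoff_slope K (lin_obs N v \<xi>) * drift \<xi> v"
proof -
  let ?t = "cutoff_slope K (lin_obs N v \<xi>)"
  have "generator (jumps \<xi>) (cutoff_obs v K) \<xi>
      \<le> sum_list (map (\<lambda>p. ?t * (snd p * (lin_obs N v (fst p) - lin_obs N v \<xi>))) (jumps \<xi>))"
    unfolding generator_cutoff_obs[OF assms(1)]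
  proof (rule sum_list_mono)
    fix p assume p: "p \<in> set (jumps \<xi>)"
    have "snd p * (cutoff K (lin_obs N v (fst p)) - cutoff K (lin_obs N v \<xi>))
        \<le> snd p * (?t * (lin_obs N v (fst p) - lin_obs N v \<xi>))"
      using cutoff_taylor(2)[OF assms(2)] jump_rate_nonneg[OF assms(1) p]
      by (intro mult_left_mono) (auto simp: algebra_simps)
    then show "snd p * (cutoff K (lin_obs N v (fst p)) - cutoff K (lin_obs N v \<xi>))
        \<le> ?t * (snd p * (lin_obs N v (fst p) - lin_obs N v \<xi>))"
      by (simp add: algebra_simps)
  qed
  also have "\<dots> = ?t * generator (jumps \<xi>) (lin_obs N v) \<xi>"
    unfolding generator_def by (simp add: sum_list_const_mult)
  finally show ?thesis by (simp add: generator_jumps_lin_obs)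
qed

lemma generator_cutoff_obs_ge:
  assumes "valid \<xi>" "0 < K" "bounded_weights v V"
  shows "cutoff_slope K (lin_obs N v \<xi>) * drift \<xi> v
       - real (6 * N + 4) * (rate_const * (1 + particle_count N \<xi>)\<^sup>2 * V\<^sup>2 / (2*K))
       \<le> generator (jumps \<xi>) (cutoff_obs v K) \<xi>"
proof -
  let ?t = "cutoff_slope K (lin_obs N v \<xi>)"
  let ?B = "rate_const * (1 + particle_count N \<xi>)\<^sup>2 * V\<^sup>2 / (2*K)"
  let ?D = "\<lambda>p. lin_obs N v (fst p) - lin_obs N v \<xi>"
  let ?C = "\<lambda>p. cutoff K (lin_obs N v (fst p)) - cutoff K (lin_obs N v \<xi>)"
  have "real (length (jumps \<xi>)) * (- ?B) = sum_list (map (\<lambda>_. - ?B) (jumps \<xi>))"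
    by (simp add: sum_list_triv)
  also have "\<dots> \<le> sum_list (map (\<lambda>p. snd p * ?C p - ?t * (snd p * ?D p)) (jumps \<xi>))"
  proof (rule sum_list_mono)
    fix p assume p: "p \<in> set (jumps \<xi>)"
    have r: "0 \<le> snd p" "snd p \<le> rate_const * (1 + particle_count N \<xi>)\<^sup>2"
      using jump_rate_nonneg[OF assms(1) p] jump_rate_le[OF assms(1) p] .
    have "\<bar>?D p\<bar>\<^sup>2 \<le> V\<^sup>2"
      using bounded_weights_jump[OF assms(3) p] by (intro power_mono) auto
    then have "(?D p)\<^sup>2 \<le> V\<^sup>2" by simp
    then have "snd p * ((?D p)\<^sup>2 / (2*K)) \<le> rate_const * (1 + particle_count N \<xi>)\<^sup>2 * (V\<^sup>2 / (2*K))"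
      using r assms(2) by (intro mult_mono divide_right_mono) auto
    moreover have "snd p * (- (?D p)\<^sup>2 / (2*K)) \<le> snd p * (?C p - ?t * ?D p)"
      using cutoff_taylor(1)[OF assms(2)] r by (intro mult_left_mono) auto
    ultimately show "- ?B \<le> snd p * ?C p - ?t * (snd p * ?D p)"
      by (simp add: algebra_simps)
  qed
  also have "\<dots> = generator (jumps \<xi>) (cutoff_obs v K) \<xi> - ?t * generator (jumps \<xi>) (lin_obs N v) \<xi>"
    unfolding generator_cutoff_obs[OF assms(1)] unfolding generator_def
    by (simp only: sum_list_subtractf sum_list_const_mult)
  finally show ?thesis
    unfolding length_jumps generator_jumps_lin_obs by linarith
qed

lemma generator_cutoff_obs_far:
  assumes "valid \<xi>" "0 < K" "bounded_weights v V" "2*K + V < lin_obs N v \<xi>"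
  shows "generator (jumps \<xi>) (cutoff_obs v K) \<xi> = 0"
proof -
  have "map (\<lambda>p. snd p * (cutoff K (lin_obs N v (fst p)) - cutoff K (lin_obs N v \<xi>))) (jumps \<xi>)
      = map (\<lambda>_. 0) (jumps \<xi>)"
  proof (rule map_cong[OF refl])
    fix p assume p: "p \<in> set (jumps \<xi>)"
    have "2*K \<le> lin_obs N v (fst p)" "2*K \<le> lin_obs N v \<xi>"
      using bounded_weights_jump[OF assms(3) p] bounded_weights_ge_1[OF assms(3)] assms(4) by linarith+
    then have "cutoff K (lin_obs N v (fst p)) = 3*K/2" "cutoff K (lin_obs N v \<xi>) = 3*K/2"
      using cutoff_eq_const[OF assms(2)] by blast+
    then show "snd p * (cutoff K (lin_obs N v (fst p)) - cutoff K (lin_obs N v \<xi>)) = 0"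
      by simp
  qed
  then show ?thesis
    unfolding generator_cutoff_obs[OF assms(1)] by (simp only: sum_list_0)
qed

lemma generator_cutoff_obs_near:
  assumes "valid \<xi>" "bounded_weights v V" "lin_obs N v \<xi> + V \<le> K"
  shows "generator (jumps \<xi>) (cutoff_obs v K) \<xi> = drift \<xi> v"
proof -
  have "map (\<lambda>p. snd p * (cutoff K (lin_obs N v (fst p)) - cutoff K (lin_obs N v \<xi>))) (jumps \<xi>)
      = map (\<lambda>p. snd p * (lin_obs N v (fst p) - lin_obs N v \<xi>)) (jumps \<xi>)"
  proof (rule map_cong[OF refl])
    fix p assume p: "p \<in> set (jumps \<xi>)"
    have "lin_obs N v (fst p) \<le> K" "lin_obs N v \<xi> \<le> K"
      using bounded_weights_jump[OF assms(2) p] bounded_weights_ge_1[OF assms(2)] assms(3) by linarith+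
    then show "snd p * (cutoff K (lin_obs N v (fst p)) - cutoff K (lin_obs N v \<xi>))
        = snd p * (lin_obs N v (fst p) - lin_obs N v \<xi>)"
      by (simp add: cutoff_eq_id)
  qed
  then have "generator (jumps \<xi>) (cutoff_obs v K) \<xi> = generator (jumps \<xi>) (lin_obs N v) \<xi>"
    unfolding generator_cutoff_obs[OF assms(1)] unfolding generator_def by (rule arg_cong[where f=sum_list])
  then show ?thesis
    by (simp add: generator_jumps_lin_obs)
qed

text \<open>The parabola \<open>x (N + 1 - x)\<close> is a Lyapunov function: its drift is bounded by a constant
  minus a multiple of the particle number, which gives the first moment of \<open>\<mu>\<close>.\<close>

lemma drift_parabola_le: "drift \<xi> (parabola N) \<le> real N * (a + b + c + d) - 2 * \<epsilon> * particle_count N \<xi>"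
proof -
  let ?s0 = "\<Sum>x\<in>{1..N}. real (\<xi> 0 x)" and ?s1 = "\<Sum>x\<in>{1..N}. real (\<xi> 1 x)"
  have N: "1 \<le> N" using N_ge_2 by simp
  have nonneg: "0 \<le> ?s0" "0 \<le> ?s1" by (auto intro: sum_nonneg)
  have "drift \<xi> (parabola N) = -2 * ?s0 - 2 * \<epsilon> * ?s1 + real N * (a + b + c + d)
      + (\<epsilon> - 1) * real N * (real (\<xi> 1 1) + real (\<xi> 1 N))"
  proof -
    have layer: "(\<Sum>x\<in>{1..<N}. (real (\<xi> i x) - real (\<xi> i (x+1))) * (parabola N i (x+1) - parabola N i x))
        = -2 * (\<Sum>x\<in>{1..N}. real (\<xi> i x)) + real N * real (\<xi> i 1) + real N * real (\<xi> i N)" for i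
      by (rule sum_by_parts_parabola[OF N])
    have "parabola N 1 x - parabola N 0 x = 0" "parabola N i 1 = real N" "parabola N i N = real N" for i x
      by (simp_all add: parabola_def)
    then show ?thesis
      unfolding drift_form_def layer by (simp add: algebra_simps)
  qed
  moreover have "(\<epsilon> - 1) * real N * (real (\<xi> 1 1) + real (\<xi> 1 N)) \<le> 0"
    using eps_le_1 by (intro mult_nonpos_nonneg) (auto intro: mult_nonpos_nonneg)
  moreover have "\<epsilon> * ?s0 \<le> 1 * ?s0" using eps_le_1 nonneg by (intro mult_right_mono) auto
  ultimately show ?thesis
    unfolding lin_obs_def by (simp add: algebra_simps)
qed

lemma bounded_weights_parabola: "bounded_weights (parabola N) ((real N + 1)\<^sup>2)"
  unfolding bounded_weights_def
proof (intro allI impI conjI)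
  fix i x :: nat assume "x \<in> {1..N}"
  then have x: "1 \<le> real x" "1 \<le> real N + 1 - real x" "real x \<le> real N + 1" by auto
  have "1 * 1 \<le> real x * (real N + 1 - real x)" using x by (intro mult_mono) auto
  then show "1 \<le> parabola N i x" unfolding parabola_def by simp
  have "real x * (real N + 1 - real x) \<le> (real N + 1) * (real N + 1)" using x by (intro mult_mono) auto
  then show "parabola N i x \<le> (real N + 1)\<^sup>2" unfolding parabola_def by (simp add: power2_eq_square)
qed

lemma mean_cutoff_slope_count_le:
  assumes K: "0 < K"
  shows "(\<Sum>\<xi>\<in>{\<xi>. valid \<xi> \<and> particle_count N \<xi> \<le> 2*K + (real N + 1)\<^sup>2}.
            cutoff_slope K (lin_obs N (parabola N) \<xi>) * particle_count N \<xi> * pmf \<mu> \<xi>)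
         \<le> real N * (a + b + c + d) / (2*\<epsilon>)"
proof -
  let ?G = "{\<xi>. valid \<xi> \<and> particle_count N \<xi> \<le> 2*K + (real N + 1)\<^sup>2}"
  let ?t = "\<lambda>\<xi>. cutoff_slope K (lin_obs N (parabola N) \<xi>)"
  let ?c = "real N * (a + b + c + d)"
  have finG: "finite ?G" by (rule finite_valid_count_le)
  have "0 = measure_pmf.expectation \<mu> (\<lambda>\<xi>. generator (jumps \<xi>) (cutoff_obs (parabola N) K) \<xi>)"
    using expectation_generator_cutoff_obs[OF bounded_weights_parabola K] by simp
  also have "\<dots> = (\<Sum>\<xi>\<in>?G. generator (jumps \<xi>) (cutoff_obs (parabola N) K) \<xi> * pmf \<mu> \<xi>)"
  proof (rule integral_measure_pmf_real[OF finG])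
    fix \<xi> assume \<xi>: "\<xi> \<in> set_pmf \<mu>" "generator (jumps \<xi>) (cutoff_obs (parabola N) K) \<xi> \<noteq> 0"
    have "valid \<xi>" using \<xi>(1) by (rule valid_if_in_support)
    then show "\<xi> \<in> ?G"
      using generator_cutoff_obs_far[OF _ K bounded_weights_parabola] \<xi>(2)
        bounded_weights_count_le[OF bounded_weights_parabola, of \<xi>] by fastforce
  qed
  also have "\<dots> \<le> (\<Sum>\<xi>\<in>?G. ?t \<xi> * (?c - 2 * \<epsilon> * particle_count N \<xi>) * pmf \<mu> \<xi>)"
  proof (rule sum_mono, rule mult_right_mono)
    fix \<xi> assume "\<xi> \<in> ?G"
    then have "generator (jumps \<xi>) (cutoff_obs (parabola N) K) \<xi> \<le> ?t \<xi> * drift \<xi> (parabola N)"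
      using generator_cutoff_obs_le K by simp
    also have "\<dots> \<le> ?t \<xi> * (?c - 2 * \<epsilon> * particle_count N \<xi>)"
      using drift_parabola_le cutoff_slope_bounds[OF K] by (intro mult_left_mono) auto
    finally show "generator (jumps \<xi>) (cutoff_obs (parabola N) K) \<xi> \<le> ?t \<xi> * (?c - 2 * \<epsilon> * particle_count N \<xi>)" .
  qed simp
  also have "\<dots> = ?c * (\<Sum>\<xi>\<in>?G. ?t \<xi> * pmf \<mu> \<xi>) - 2 * \<epsilon> * (\<Sum>\<xi>\<in>?G. ?t \<xi> * particle_count N \<xi> * pmf \<mu> \<xi>)"
    by (simp add: sum_subtractf sum_distrib_left algebra_simps)
  finally have "2 * \<epsilon> * (\<Sum>\<xi>\<in>?G. ?t \<xi> * particle_count N \<xi> * pmf \<mu> \<xi>) \<le> ?c * (\<Sum>\<xi>\<in>?G. ?t \<xi> * pmf \<mu> \<xi>)"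
    by simp
  moreover have "(\<Sum>\<xi>\<in>?G. ?t \<xi> * pmf \<mu> \<xi>) \<le> 1"
    using cutoff_slope_bounds[OF K] by (intro sum_weighted_pmf_le_1[OF finG]) simp
  then have "?c * (\<Sum>\<xi>\<in>?G. ?t \<xi> * pmf \<mu> \<xi>) \<le> ?c"
    using rho_nonneg by (simp add: mult_left_le)
  ultimately show ?thesis
    using eps_pos by (simp add: field_simps)
qed

lemma mean_truncated_count_le:
  "(\<Sum>\<xi>\<in>{\<xi>. valid \<xi> \<and> lin_obs N (parabola N) \<xi> \<le> k}. particle_count N \<xi> * pmf \<mu> \<xi>)
     \<le> real N * (a + b + c + d) / (2*\<epsilon>)"
proof -
  define K where "K = max 1 k"
  let ?A = "{\<xi>. valid \<xi> \<and> lin_obs N (parabola N) \<xi> \<le> k}"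
  let ?G = "{\<xi>. valid \<xi> \<and> particle_count N \<xi> \<le> 2*K + (real N + 1)\<^sup>2}"
  have K: "0 < K" "k \<le> K" "1 \<le> K" unfolding K_def by auto
  have AG: "?A \<subseteq> ?G"
  proof
    fix \<xi> assume "\<xi> \<in> ?A"
    then have "valid \<xi>" "lin_obs N (parabola N) \<xi> \<le> k" by auto
    moreover have "particle_count N \<xi> \<le> 2*K + (real N + 1)\<^sup>2"
      using bounded_weights_count_le[OF bounded_weights_parabola, of \<xi>] calculation(2) K
        zero_le_power2[of "real N + 1"] by linarith
    ultimately show "\<xi> \<in> ?G" by simp
  qed
  have "(\<Sum>\<xi>\<in>?A. particle_count N \<xi> * pmf \<mu> \<xi>)
      = (\<Sum>\<xi>\<in>?A. cutoff_slope K (lin_obs N (parabola N) \<xi>) * particle_count N \<xi> * pmf \<mu> \<xi>)"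
    using K by (intro sum.cong) (auto simp: cutoff_slope_def)
  also have "\<dots> \<le> (\<Sum>\<xi>\<in>?G. cutoff_slope K (lin_obs N (parabola N) \<xi>) * particle_count N \<xi> * pmf \<mu> \<xi>)"
    using cutoff_slope_bounds[OF K(1)]
    by (intro sum_mono2[OF finite_valid_count_le AG]) (auto simp: lin_obs_nonneg)
  also have "\<dots> \<le> real N * (a + b + c + d) / (2*\<epsilon>)"
    by (rule mean_cutoff_slope_count_le[OF K(1)])
  finally show ?thesis .
qed

lemma particle_count_integrable: "integrable (measure_pmf \<mu>) (particle_count N)"
proof (rule integrable_pmf_bounded_truncations)
  show "set_pmf \<mu> \<subseteq> {\<xi>. valid \<xi>}" using valid_if_in_support by auto
  show "finite {\<xi> \<in> {\<xi>. valid \<xi>}. lin_obs N (parabola N) \<xi> \<le> k}" for k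
    using bounded_weights_count_le[OF bounded_weights_parabola]
    by (intro finite_subset[OF _ finite_valid_count_le[of \<sigma> N k]]) (auto intro: order_trans)
  show "(\<Sum>\<xi>\<in>{\<xi> \<in> {\<xi>. valid \<xi>}. lin_obs N (parabola N) \<xi> \<le> k}. particle_count N \<xi> * pmf \<mu> \<xi>)
      \<le> real N * (a + b + c + d) / (2*\<epsilon>)" for k
    using mean_truncated_count_le[of k] by simp
qed (simp add: lin_obs_nonneg)

lemma occupation_integrable: "integrable (measure_pmf \<mu>) (\<lambda>\<xi>. real (\<xi> i x))"
proof (rule Bochner_Integration.integrable_bound[OF particle_count_integrable])
  show "AE \<xi> in measure_pmf \<mu>. norm (real (\<xi> i x)) \<le> norm (particle_count N \<xi>)"
    unfolding AE_measure_pmf_iff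
    using occupation_le_particle_count valid_if_in_support lin_obs_nonneg by fastforce
qed simp

definition theta :: "nat \<Rightarrow> nat \<Rightarrow> real" where
  "theta i x = measure_pmf.expectation \<mu> (\<lambda>\<xi>. real (\<xi> i x))"

lemma drift_integrable: "integrable (measure_pmf \<mu>) (\<lambda>\<xi>. drift \<xi> v)"
  unfolding drift_form_def by (simp add: occupation_integrable)

lemma expectation_drift: "measure_pmf.expectation \<mu> (\<lambda>\<xi>. drift \<xi> v) = drift_form \<epsilon> \<gamma> N a b c d theta v"
  unfolding drift_form_def theta_def
  by (simp add: occupation_integrable integral_add integral_diff integral_sum
      integral_mult_left_zero integral_mult_right_zero)

lemma generator_cutoff_obs_dominated:
  assumes "bounded_weights v V" "valid \<xi>" "1 \<le> K"
  shows "\<bar>generator (jumps \<xi>) (cutoff_obs v K) \<xi>\<bar>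
       \<le> \<bar>drift \<xi> v\<bar> + real (6 * N + 4) * rate_const * V\<^sup>2 * (3 + V) / 2 * (1 + particle_count N \<xi>)"
proof -
  let ?g = "generator (jumps \<xi>) (cutoff_obs v K) \<xi>"
  let ?n = "particle_count N \<xi>"
  let ?C = "real (6 * N + 4) * rate_const * V\<^sup>2 * (3 + V) / 2"
  have K: "0 < K" using assms(3) by simp
  have n: "0 \<le> ?n" by (simp add: lin_obs_nonneg)
  have V: "1 \<le> V" by (rule bounded_weights_ge_1[OF assms(1)])
  have "0 \<le> rate_const" unfolding rate_const_def using rho_nonneg by simp
  then have C: "0 \<le> ?C * (1 + ?n)" using V n by simp
  show ?thesis
  proof (cases "2*K + V < lin_obs N v \<xi>")
    case True
    then show ?thesis using generator_cutoff_obs_far[OF assms(2) K assms(1)] C by simp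
  next
    case False
    then have "?n \<le> 2*K + V" using bounded_weights_count_le[OF assms(1), of \<xi>] by linarith
    then have "real (6 * N + 4) * (rate_const * V\<^sup>2) * ((1 + ?n)\<^sup>2 / (2*K))
        \<le> real (6 * N + 4) * (rate_const * V\<^sup>2) * ((1 + ?n) * (3 + V) / 2)"
      using square_over_level_le[OF n _ assms(3) V] \<open>0 \<le> rate_const\<close> by (intro mult_left_mono) auto
    then have "real (6 * N + 4) * (rate_const * (1 + ?n)\<^sup>2 * V\<^sup>2 / (2*K)) \<le> ?C * (1 + ?n)"
      by (simp add: field_simps)
    moreover have "\<bar>cutoff_slope K (lin_obs N v \<xi>) * drift \<xi> v\<bar> \<le> \<bar>drift \<xi> v\<bar>"
      using cutoff_slope_bounds[OF K] by (simp add: abs_mult mult_left_le_one_le)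
    ultimately have "?g \<le> \<bar>drift \<xi> v\<bar> + ?C * (1 + ?n)" "- ?g \<le> \<bar>drift \<xi> v\<bar> + ?C * (1 + ?n)"
      using generator_cutoff_obs_le[OF assms(2) K, of v] generator_cutoff_obs_ge[OF assms(2) K assms(1)] C
        abs_ge_self[of "cutoff_slope K (lin_obs N v \<xi>) * drift \<xi> v"]
        abs_ge_minus_self[of "cutoff_slope K (lin_obs N v \<xi>) * drift \<xi> v"]
      by linarith+
    then show ?thesis by (rule abs_leI)
  qed
qed

lemma expectation_drift_eq_0:
  assumes "bounded_weights v V"
  shows "measure_pmf.expectation \<mu> (\<lambda>\<xi>. drift \<xi> v) = 0"
proof -
  define g where "g k \<xi> = generator (jumps \<xi>) (cutoff_obs v (real k + 1)) \<xi>" for k \<xi>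
  let ?C = "real (6 * N + 4) * rate_const * V\<^sup>2 * (3 + V) / 2"
  have "(\<lambda>k. measure_pmf.expectation \<mu> (g k)) \<longlonglongrightarrow> measure_pmf.expectation \<mu> (\<lambda>\<xi>. drift \<xi> v)"
  proof (rule integral_dominated_convergence[where w="\<lambda>\<xi>. \<bar>drift \<xi> v\<bar> + ?C * (1 + particle_count N \<xi>)"])
    show "integrable (measure_pmf \<mu>) (\<lambda>\<xi>. \<bar>drift \<xi> v\<bar> + ?C * (1 + particle_count N \<xi>))"
      using drift_integrable particle_count_integrable by simp
    show "AE \<xi> in measure_pmf \<mu>. (\<lambda>k. g k \<xi>) \<longlonglongrightarrow> drift \<xi> v"
      unfolding AE_measure_pmf_iff
    proof
      fix \<xi> assume "\<xi> \<in> set_pmf \<mu>"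
      then have \<xi>: "valid \<xi>" by (rule valid_if_in_support)
      obtain k0 :: nat where "lin_obs N v \<xi> + V \<le> real k0" using real_arch_simple by blast
      then have "\<forall>\<^sub>F k in sequentially. g k \<xi> = drift \<xi> v"
        unfolding eventually_sequentially g_def
        by (intro exI[of _ k0] allI impI generator_cutoff_obs_near[OF \<xi> assms]) auto
      then show "(\<lambda>k. g k \<xi>) \<longlonglongrightarrow> drift \<xi> v" by (rule tendsto_eventually)
    qed
    show "AE \<xi> in measure_pmf \<mu>. norm (g k \<xi>) \<le> \<bar>drift \<xi> v\<bar> + ?C * (1 + particle_count N \<xi>)" for k
      unfolding AE_measure_pmf_iff g_def
      using generator_cutoff_obs_dominated[OF assms valid_if_in_support] by simp
  qed simp_all
  moreover have "measure_pmf.expectation \<mu> (g k) = 0" for k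
    unfolding g_def by (rule expectation_generator_cutoff_obs[OF assms]) simp
  ultimately show ?thesis
    using LIMSEQ_unique[of "\<lambda>k. measure_pmf.expectation \<mu> (g k)"] by simp
qed

text \<open>Every weight vector is a difference of two bounded ones, so the stationary profile \<open>theta\<close>
  annihilates the whole drift form.\<close>

lemma drift_form_theta_eq_0: "drift_form \<epsilon> \<gamma> N a b c d theta v = 0"
proof -
  define C where "C = 1 + (\<Sum>x\<in>{1..N}. \<bar>v 0 x\<bar> + \<bar>v 1 x\<bar>)"
  have v_le: "\<bar>v i x\<bar> \<le> C - 1" if "i \<le> 1" "x \<in> {1..N}" for i x
  proof -
    have "\<bar>v 0 x\<bar> + \<bar>v 1 x\<bar> \<le> (\<Sum>x\<in>{1..N}. \<bar>v 0 x\<bar> + \<bar>v 1 x\<bar>)"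
      using that by (intro member_le_sum) auto
    moreover have "i = 0 \<or> i = 1" using that by auto
    ultimately show ?thesis unfolding C_def by auto
  qed
  have "1 \<le> C" unfolding C_def by (simp add: sum_nonneg)
  then have const: "bounded_weights (\<lambda>_ _. C) C" unfolding bounded_weights_def by simp
  have shifted: "bounded_weights (\<lambda>i x. v i x + C) (2 * C)"
    unfolding bounded_weights_def
  proof (intro allI impI)
    fix i x :: nat assume "i \<le> 1" "x \<in> {1..N}"
    then show "1 \<le> v i x + C \<and> v i x + C \<le> 2 * C" using v_le[of i x] by auto
  qed
  have "drift_form \<epsilon> \<gamma> N a b c d theta (\<lambda>i x. v i x + C)
      = drift_form \<epsilon> \<gamma> N a b c d theta v + drift_form \<epsilon> \<gamma> N a b c d theta (\<lambda>_ _. C)"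
    by (rule drift_form_add_weights)
  then show ?thesis
    using expectation_drift_eq_0[OF shifted] expectation_drift_eq_0[OF const] expectation_drift by simp
qed

definition profile_coeffs :: "real^4" where
  "profile_coeffs = matrix_inv (Mmat \<epsilon> \<gamma> N) *v vector [a, b, c, d]"

lemma drift_form_profile_coeffs: "drift_form \<epsilon> \<gamma> N a b c d (profile profile_coeffs) v = 0"
  unfolding drift_form_reservoirs[of _ _ _ a b c d] drift_form_profile
    profile_coeffs_def Mmat_matrix_inv vector_4
  by simp

lemma theta_eq_profile:
  assumes "i \<le> 1" "x \<in> {1..N}"
  shows "theta i x = profile profile_coeffs i x"
proof -
  have "drift_form \<epsilon> \<gamma> N 0 0 0 0 (\<lambda>i x. theta i x - profile profile_coeffs i x) v = 0" for v
    unfolding drift_form_diff[where a=a and b=b and c=c and d=d]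
    using drift_form_theta_eq_0 drift_form_profile_coeffs by simp
  then have "theta i x - profile profile_coeffs i x = 0"
    by (rule drift_form_nondegenerate[OF _ assms])
  then show ?thesis by simp
qed

lemma cvec_inner: "cvec \<epsilon> \<gamma> N k \<bullet> vector [a, b, c, d] = profile_coeffs $ k"
  unfolding cvec_def profile_coeffs_def by (simp add: matrix_vector_mult_def inner_vec_def)

end

theorem mainTheorem7:
  fixes \<sigma> :: int and N :: nat and \<epsilon> \<gamma> \<rho>L0 \<rho>L1 \<rho>R0 \<rho>R1 :: real and \<mu> :: "cfg pmf"
  assumes "\<sigma> \<in> {-1, 0, 1}"
    and "0 < \<epsilon>" and "\<epsilon> \<le> 1" and "0 < \<gamma>" and "2 \<le> N"
    and "0 \<le> \<rho>L0" and "0 \<le> \<rho>L1" and "0 \<le> \<rho>R0" and "0 \<le> \<rho>R1"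
    and "\<sigma> = -1 \<longrightarrow> \<rho>L0 \<le> 1 \<and> \<rho>L1 \<le> 1 \<and> \<rho>R0 \<le> 1 \<and> \<rho>R1 \<le> 1"
    and "stationary \<sigma> N \<epsilon> \<gamma> (\<lambda>i. if i = 0 then \<rho>L0 else \<rho>L1)
                              (\<lambda>i. if i = 0 then \<rho>R0 else \<rho>R1) \<mu>"
  shows "\<forall>x \<in> {1..N}.
     (let \<rho> = vector [\<rho>L0, \<rho>L1, \<rho>R0, \<rho>R1] :: real^4;
          a1 = alpha1 \<epsilon> \<gamma>; a2 = alpha2 \<epsilon> \<gamma>;
          c1 = cvec \<epsilon> \<gamma> N 1 \<bullet> \<rho>; c2 = cvec \<epsilon> \<gamma> N 2 \<bullet> \<rho>;
          c3 = cvec \<epsilon> \<gamma> N 3 \<bullet> \<rho>; c4 = cvec \<epsilon> \<gamma> N 4 \<bullet> \<rho>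
      in measure_pmf.expectation \<mu> (\<lambda>\<eta>. real (\<eta> 0 x))
           = c1 * real x + c2 + \<epsilon> * c3 * a1 ^ x + \<epsilon> * c4 * a2 ^ x
       \<and> measure_pmf.expectation \<mu> (\<lambda>\<eta>. real (\<eta> 1 x))
           = c1 * real x + c2 - c3 * a1 ^ x - c4 * a2 ^ x)"
proof -
  interpret stationary_switching_system \<sigma> N \<epsilon> \<gamma> \<rho>L0 \<rho>L1 \<rho>R0 \<rho>R1 \<mu>
    by unfold_locales (use assms in auto)
  have "theta i x = profile profile_coeffs i x" if "i \<le> 1" "x \<in> {1..N}" for i x
    using that by (rule theta_eq_profile)
  then show ?thesis
    unfolding Let_def cvec_inner theta_def profile_def by simp
qed

end
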